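(* Let $0\le r_A,r_B\le n$ with $m=r_A+r_B-n\ge1$, $a=n-r_A\ge1$, $b=n-r_B\ge1$, let $p,q,r\in\mathbb R$, let $S\in\mathbb C^{m\times m}$ be invertible self-adjoint, and set $P=pF_{m\times b}$, $Q=qF_{a\times b}$, $R=rF_{a\times m}$. Consider the vertex coupling given by the PQRS-form $B_{PQRS}\Psi'=A_{PQRS}\Psi$ with scattering matrix $\mathcal S(k)$. Split the edge indices into blocks $\{1\}=\{1,\dots,m\}$, $\{2\}=\{m+1,\dots,m+a\}$, $\{3\}=\{m+a+1,\dots,n\}$. Put $l_p=(n-r_B)(r_A+r_B-n)$, $l_q=(n-r_B)(n-r_A)$, $l_r=(n-r_A)(r_A+r_B-n)$, $D_\infty=1+l_p|p|^2+l_q|q-mrp|^2$ and $D_0=1+l_r|r|^2+l_q|q|^2$. Then for every $i\in\{\mu\}$, $j\in\{\nu\}$ the limits of $|\mathcal S(k)_{ij}|$ depend only on the blocks, and $$\lim_{k\to\infty}|\mathcal S_{\{1\}\{2\}}(k)|=\frac{2(n-r_B)|p|\,|q-mrp|}{D_\infty},\quad \lim_{k\to\infty}|\mathcal S_{\{2\}\{3\}}(k)|=\frac{2|q-mrp|}{D_\infty},\quad \lim_{k\to\infty}|\mathcal S_{\{3\}\{1\}}(k)|=\frac{2|p|}{D_\infty},$$ $$\lim_{k\to0^+}|\mathcal S_{\{1\}\{2\}}(k)|=\frac{2|r|}{D_0},\quad \lim_{k\to0^+}|\mathcal S_{\{2\}\{3\}}(k)|=\frac{2|q|}{D_0},\quad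 \lim_{k\to0^+}|\mathcal S_{\{3\}\{1\}}(k)|=\frac{2(n-r_A)|r|\,|q|}{D_0}.$$
   Context: $I^{(j)}$ denotes the $j\times j$ identity matrix and $F_{u\times v}$ denotes the $u\times v$ matrix all of whose entries equal $1$. The PQRS-form boundary condition is $B_{PQRS}\Psi'=A_{PQRS}\Psi$ with $\Psi,\Psi'\in\mathbb C^n$ and (block sizes $m,a,b$) $$B_{PQRS}=\begin{pmatrix} I^{(m)} & 0 & P\\ R & I^{(a)} & Q\\ 0&0&0\end{pmatrix},\qquad A_{PQRS}=\begin{pmatrix} S & -SR^* & 0\\ 0&0&0\\ -P^* & (RP-Q)^* & I^{(b)}\end{pmatrix}.$$ Its scattering matrix is $\mathcal S(k)=-(A+\mathrm ikB)^{-1}(A-\mathrm ikB)$ for $k>0$, where $A=-A_{PQRS}$, $B=B_{PQRS}$. $\mathcal S_{\{\mu\}\{\nu\}}(k)$ denotes any entry $\mathcal S(k)_{ij}$ with $i$ in block $\{\mu\}$ and $j$ in block $\{\nu\}$. *)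

theory Defs
  imports Complex_Main "Jordan_Normal_Form.Gauss_Jordan_Elimination"
begin

definition adj :: "complex mat \<Rightarrow> complex mat" where
  "adj M = transpose_mat (map_mat cnj M)"

definition ones_mat :: "nat \<Rightarrow> nat \<Rightarrow> complex mat" where
  "ones_mat u v = mat u v (\<lambda>_. 1)"

definition blk :: "nat \<Rightarrow> nat \<Rightarrow> nat \<Rightarrow> nat" where
  "blk m a i = (if i < m then 0 else if i < m + a then 1 else 2)"

definition blk_off :: "nat \<Rightarrow> nat \<Rightarrow> nat \<Rightarrow> nat" where
  "blk_off m a u = (if u = 0 then 0 else if u = 1 then m else m + a)"

definition block3 :: "nat \<Rightarrow> nat \<Rightarrow> nat \<Rightarrow> complex mat list list \<Rightarrow> complex mat" where
  "block3 m a b M = mat (m + a + b) (m + a + b)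
     (\<lambda>(i,j). (M ! blk m a i ! blk m a j) $$ (i - blk_off m a (blk m a i), j - blk_off m a (blk m a j)))"

definition B_PQRS :: "nat \<Rightarrow> nat \<Rightarrow> nat \<Rightarrow> complex mat \<Rightarrow> complex mat \<Rightarrow> complex mat \<Rightarrow> complex mat" where
  "B_PQRS m a b P Q R = block3 m a b
     [[1\<^sub>m m, 0\<^sub>m m a, P],
      [R, 1\<^sub>m a, Q],
      [0\<^sub>m b m, 0\<^sub>m b a, 0\<^sub>m b b]]"

definition A_PQRS :: "nat \<Rightarrow> nat \<Rightarrow> nat \<Rightarrow> complex mat \<Rightarrow> complex mat \<Rightarrow> complex mat \<Rightarrow> complex mat \<Rightarrow> complex mat" where
  "A_PQRS m a b P Q R S = block3 m a b
     [[S, - (S * adj R), 0\<^sub>m m b],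
      [0\<^sub>m a m, 0\<^sub>m a a, 0\<^sub>m a b],
      [- adj P, adj (R * P - Q), 1\<^sub>m b]]"

definition minv :: "complex mat \<Rightarrow> complex mat" where
  "minv M = the (mat_inverse M)"

definition scat_PQRS ::
  "nat \<Rightarrow> nat \<Rightarrow> nat \<Rightarrow> complex mat \<Rightarrow> complex mat \<Rightarrow> complex mat \<Rightarrow> complex mat \<Rightarrow> real \<Rightarrow> complex mat" where
  "scat_PQRS m a b P Q R S k =
     (let A = - A_PQRS m a b P Q R S; B = B_PQRS m a b P Q R
      in - (minv (A + (\<i> * complex_of_real k) \<cdot>\<^sub>m B) * (A - (\<i> * complex_of_real k) \<cdot>\<^sub>m B)))"

end

theory Submission
  imports Defs "Jordan_Normal_Form.Determinant"
begin

(* Both PQRS matrices factor through an invertible block matrix E. At high energy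
   B_PQRS = E K and A_PQRS = E (Sigma + Omega); at low energy A_PQRS = E K and
   B_PQRS = E (Sigma + Omega), where now Sigma involves S^-1. Hence S(k) equals
   +-(z K - Sigma - Omega)^-1 (z K + Sigma + Omega) with z = ik, resp. z = -i/k.
   Together with a projection Pi, the factors satisfy the relations of the locale
   cayley_factors, which give
     (z K - Sigma - Omega)^-1 (z K + Sigma + Omega) = -I + 2 K* (K K* + Pi - Sigma/z)^-1 K,
   and this tends to -I + 2 K* (K K* + Pi)^-1 K as 1/z -> 0. For all-ones blocks,
   K K* + Pi is the identity plus multiples of all-ones blocks, its inverse has the same
   shape, and the off-diagonal blocks of K* (K K* + Pi)^-1 K are the stated limits. *)

section \<open>Elementary matrix identities and constant matrices\<close>

lemma mult_mat_index_sum: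
  "A \<in> carrier_mat r n \<Longrightarrow> B \<in> carrier_mat n c \<Longrightarrow> i < r \<Longrightarrow> j < c \<Longrightarrow>
    (A * B) $$ (i, j) = (\<Sum>l<n. A $$ (i, l) * B $$ (l, j))"
  by (simp add: scalar_prod_def lessThan_atLeast0)

lemma smult_smult_mat [simp]: "a \<cdot>\<^sub>m (b \<cdot>\<^sub>m A) = (a * b) \<cdot>\<^sub>m (A :: 'a::semigroup_mult mat)"
  by (intro eq_matI) (auto simp: mult.assoc)

lemma one_smult_mat [simp]: "1 \<cdot>\<^sub>m A = (A :: 'a::monoid_mult mat)"
  by (intro eq_matI) auto

lemma minus_zero_mat [simp]: "dim_row A = r \<Longrightarrow> dim_col A = c \<Longrightarrow> A - 0\<^sub>m r c = (A :: 'a::group_add mat)"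
  by (intro eq_matI) auto

lemma zero_minus_mat [simp]:
  "dim_row A = r \<Longrightarrow> dim_col A = c \<Longrightarrow> 0\<^sub>m r c - A = - (A :: 'a::group_add mat)"
  by (intro eq_matI) auto

lemma add_uminus_mat [simp]: "A + - A = (0\<^sub>m (dim_row A) (dim_col A) :: 'a::group_add mat)"
  and uminus_add_mat [simp]: "- A + A = (0\<^sub>m (dim_row A) (dim_col A) :: 'a::group_add mat)"
  by (intro eq_matI; simp)+

lemma add_zero_mat [simp]:
  "dim_row A = r \<Longrightarrow> dim_col A = c \<Longrightarrow> A + 0\<^sub>m r c = (A :: 'a::monoid_add mat)"
  "dim_row A = r \<Longrightarrow> dim_col A = c \<Longrightarrow> 0\<^sub>m r c + A = (A :: 'a::monoid_add mat)"
  by (intro eq_matI; auto)+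

lemma uminus_zero_mat [simp]: "- 0\<^sub>m r c = (0\<^sub>m r c :: 'a::group_add mat)"
  by (intro eq_matI) auto

lemma add_minus_cancel_mat [simp]:
  "dim_row A = dim_row B \<Longrightarrow> dim_col A = dim_col B \<Longrightarrow> A + (B - A) = (B :: 'a::ab_group_add mat)"
  by (intro eq_matI) auto

lemma uminus_minus_mat:
  "dim_row A = dim_row B \<Longrightarrow> dim_col A = dim_col B \<Longrightarrow> - (A - B) = (B - A :: 'a::ab_group_add mat)"
  by (intro eq_matI) auto

lemma add_uminus_eq_minus_mat [simp]:
  "dim_row A = dim_row B \<Longrightarrow> dim_col A = dim_col B \<Longrightarrow> A + - B = A - (B :: 'a::group_add mat)"
  by (intro eq_matI) auto

lemma assoc_mult_mat_dim [simp]: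
  "dim_col A = dim_row B \<Longrightarrow> dim_col B = dim_row C \<Longrightarrow> A * B * C = A * (B * (C :: 'a::comm_ring mat))"
  by (rule assoc_mult_mat[of _ "dim_row A" "dim_col A" _ "dim_col B" _ "dim_col C"]) auto

lemma mult_uminus_mat: "(A :: 'a::ring mat) * (- B) = - (A * B)"
  by (intro eq_matI) (auto simp: scalar_prod_def sum_negf)

lemma adj_carrier [simp]: "A \<in> carrier_mat r c \<Longrightarrow> adj A \<in> carrier_mat c r"
  unfolding adj_def by auto

lemma adj_dim [simp]: "dim_row (adj A) = dim_col A" "dim_col (adj A) = dim_row A"
  unfolding adj_def by auto

lemma adj_index [simp]: "i < dim_col A \<Longrightarrow> j < dim_row A \<Longrightarrow> adj A $$ (i, j) = cnj (A $$ (j, i))"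
  unfolding adj_def by auto

lemma adj_adj [simp]: "adj (adj A) = A"
  by (rule eq_matI) auto

lemma adj_mult [simp]: "dim_col A = dim_row B \<Longrightarrow> adj (A * B) = adj B * adj A"
  by (intro eq_matI) (auto simp: scalar_prod_def cnj_sum mult.commute intro!: sum.cong)

lemma adj_minus [simp]:
  "dim_row A = dim_row B \<Longrightarrow> dim_col A = dim_col B \<Longrightarrow> adj (A - B) = adj A - adj B"
  by (intro eq_matI) auto

lemma adj_uminus [simp]: "adj (- A) = - adj A"
  by (intro eq_matI) auto

lemma adj_one [simp]: "adj (1\<^sub>m n) = 1\<^sub>m n"
  by (intro eq_matI) auto

lemma adj_zero [simp]: "adj (0\<^sub>m r c) = 0\<^sub>m c r"
  by (intro eq_matI) auto

definition const_mat :: "nat \<Rightarrow> nat \<Rightarrow> complex \<Rightarrow> complex mat" where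
  "const_mat u v e = e \<cdot>\<^sub>m ones_mat u v"

definition id_const_mat :: "nat \<Rightarrow> complex \<Rightarrow> complex \<Rightarrow> complex mat" where
  "id_const_mat n c d = c \<cdot>\<^sub>m 1\<^sub>m n + const_mat n n d"

lemma const_mat_carrier [simp]: "const_mat u v e \<in> carrier_mat u v"
  and const_mat_dim [simp]: "dim_row (const_mat u v e) = u" "dim_col (const_mat u v e) = v"
  by (simp_all add: const_mat_def ones_mat_def)

lemma const_mat_index [simp]: "i < u \<Longrightarrow> j < v \<Longrightarrow> const_mat u v e $$ (i, j) = e"
  by (simp add: const_mat_def ones_mat_def)

lemma id_const_mat_carrier [simp]: "id_const_mat n c d \<in> carrier_mat n n"
  and id_const_mat_dim [simp]: "dim_row (id_const_mat n c d) = n" "dim_col (id_const_mat n c d) = n"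
  by (simp_all add: id_const_mat_def)

lemma id_const_mat_index [simp]:
  "i < n \<Longrightarrow> j < n \<Longrightarrow> id_const_mat n c d $$ (i, j) = (if i = j then c else 0) + d"
  by (simp add: id_const_mat_def)

lemma one_mat_id_const: "1\<^sub>m n = id_const_mat n 1 0"
  by (intro eq_matI) auto

lemma zero_mat_const: "0\<^sub>m u v = const_mat u v 0"
  by (intro eq_matI) auto

lemma sum_shifted_products:
  fixes f g :: "nat \<Rightarrow> complex"
  shows "(\<Sum>l<n. (f l + d) * (g l + d')) =
    (\<Sum>l<n. f l * g l) + d' * (\<Sum>l<n. f l) + d * (\<Sum>l<n. g l) + of_nat n * d * d'"
  by (simp add: sum.distrib algebra_simps sum_distrib_left sum_distrib_right)

lemma id_const_mat_mult:
  "id_const_mat n c d * id_const_mat n c' d' = id_const_mat n (c * c') (c * d' + d * c' + of_nat n * d * d')"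
proof (intro eq_matI)
  fix i j assume "i < dim_row (id_const_mat n (c * c') (c * d' + d * c' + of_nat n * d * d'))"
    "j < dim_col (id_const_mat n (c * c') (c * d' + d * c' + of_nat n * d * d'))"
  then have ij: "i < n" "j < n" by auto
  have "(id_const_mat n c d * id_const_mat n c' d') $$ (i, j) =
      (\<Sum>l<n. ((if i = l then c else 0) + d) * ((if l = j then c' else 0) + d'))"
    using ij by (simp add: scalar_prod_def lessThan_atLeast0)
  also have "\<dots> = c * (if i = j then c' else 0) + d' * c + d * c' + of_nat n * d * d'"
    using ij unfolding sum_shifted_products
    by (simp add: if_distrib[of "\<lambda>x. x * _"] sum.delta sum.delta' cong: if_cong)
  finally show "(id_const_mat n c d * id_const_mat n c' d') $$ (i, j) =
      id_const_mat n (c * c') (c * d' + d * c' + of_nat n * d * d') $$ (i, j)"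
    using ij by (simp add: algebra_simps)
qed auto

lemma id_const_mat_mult_const_mat:
  "id_const_mat u c d * const_mat u v e = const_mat u v ((c + of_nat u * d) * e)"
proof (intro eq_matI)
  fix i j assume "i < dim_row (const_mat u v ((c + of_nat u * d) * e))"
    "j < dim_col (const_mat u v ((c + of_nat u * d) * e))"
  then have ij: "i < u" "j < v" by auto
  have "(id_const_mat u c d * const_mat u v e) $$ (i, j) = (\<Sum>l<u. ((if i = l then c else 0) + d) * (0 + e))"
    using ij by (simp add: scalar_prod_def lessThan_atLeast0)
  then show "(id_const_mat u c d * const_mat u v e) $$ (i, j) = const_mat u v ((c + of_nat u * d) * e) $$ (i, j)"
    using ij unfolding sum_shifted_products by (simp add: sum.delta algebra_simps)
qed auto

lemma const_mat_mult_id_const_mat: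
  "const_mat u v e * id_const_mat v c d = const_mat u v (e * (c + of_nat v * d))"
proof (intro eq_matI)
  fix i j assume "i < dim_row (const_mat u v (e * (c + of_nat v * d)))"
    "j < dim_col (const_mat u v (e * (c + of_nat v * d)))"
  then have ij: "i < u" "j < v" by auto
  have "(const_mat u v e * id_const_mat v c d) $$ (i, j) = (\<Sum>l<v. (0 + e) * ((if l = j then c else 0) + d))"
    using ij by (simp add: scalar_prod_def lessThan_atLeast0)
  then show "(const_mat u v e * id_const_mat v c d) $$ (i, j) = const_mat u v (e * (c + of_nat v * d)) $$ (i, j)"
    using ij unfolding sum_shifted_products by (simp add: sum.delta' algebra_simps)
qed auto

lemma const_mat_mult: "const_mat u v e * const_mat v w f = const_mat u w (of_nat v * e * f)"
  by (intro eq_matI) (auto simp: scalar_prod_def)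

lemma id_const_mat_add: "id_const_mat n c d + id_const_mat n c' d' = id_const_mat n (c + c') (d + d')"
  and const_mat_add: "const_mat u v e + const_mat u v f = const_mat u v (e + f)"
  and id_const_mat_add_const_mat: "id_const_mat n c d + const_mat n n e = id_const_mat n c (d + e)"
  and const_mat_add_id_const_mat: "const_mat n n e + id_const_mat n c d = id_const_mat n c (d + e)"
  and const_mat_minus: "const_mat u v e - const_mat u v f = const_mat u v (e - f)"
  and uminus_id_const_mat: "- id_const_mat n c d = id_const_mat n (- c) (- d)"
  and uminus_const_mat: "- const_mat u v e = const_mat u v (- e)"
  and adj_id_const_mat: "adj (id_const_mat n c d) = id_const_mat n (cnj c) (cnj d)"
  and adj_const_mat: "adj (const_mat u v e) = const_mat v u (cnj e)"
  by (intro eq_matI; auto)+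

lemmas const_mat_simps = id_const_mat_mult id_const_mat_mult_const_mat const_mat_mult_id_const_mat
  const_mat_mult id_const_mat_add const_mat_add id_const_mat_add_const_mat const_mat_add_id_const_mat
  uminus_id_const_mat uminus_const_mat adj_id_const_mat adj_const_mat


section \<open>Three by three block matrices\<close>

definition blocks_carrier :: "nat \<Rightarrow> nat \<Rightarrow> nat \<Rightarrow> complex mat list list \<Rightarrow> bool" where
  "blocks_carrier m a b X \<longleftrightarrow>
     (\<forall>u<3. \<forall>v<3. X ! u ! v \<in> carrier_mat ([m, a, b] ! u) ([m, a, b] ! v))"

lemma less_3_cases: "(u::nat) < 3 \<Longrightarrow> u = 0 \<or> u = 1 \<or> u = 2"
  by arith

lemma all_less_3: "(\<forall>u<3. P u) \<longleftrightarrow> P (0::nat) \<and> P 1 \<and> P 2"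
  by (auto dest: less_3_cases)

lemma blocks_carrier_literal:
  assumes "x00 \<in> carrier_mat m m" "x01 \<in> carrier_mat m a" "x02 \<in> carrier_mat m b"
    "x10 \<in> carrier_mat a m" "x11 \<in> carrier_mat a a" "x12 \<in> carrier_mat a b"
    "x20 \<in> carrier_mat b m" "x21 \<in> carrier_mat b a" "x22 \<in> carrier_mat b b"
  shows "blocks_carrier m a b [[x00, x01, x02], [x10, x11, x12], [x20, x21, x22]]"
  using assms by (simp add: blocks_carrier_def all_less_3)

lemma block3_carrier [simp]: "block3 m a b X \<in> carrier_mat (m + a + b) (m + a + b)"
  and block3_dim [simp]: "dim_row (block3 m a b X) = m + a + b" "dim_col (block3 m a b X) = m + a + b"
  by (simp_all add: block3_def)

lemma block3_index:
  "i < m + a + b \<Longrightarrow> j < m + a + b \<Longrightarrow> block3 m a b X $$ (i, j) =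
     (X ! blk m a i ! blk m a j) $$ (i - blk_off m a (blk m a i), j - blk_off m a (blk m a j))"
  by (simp add: block3_def)

lemma blk_less_3: "blk m a i < 3"
  by (simp add: blk_def)

lemma blk_local_index: "i < m + a + b \<Longrightarrow> i - blk_off m a (blk m a i) < [m, a, b] ! blk m a i"
  by (auto simp: blk_def blk_off_def)

lemma sum_lessThan_add: "(\<Sum>l<x + y. h l) = (\<Sum>l<x. h l) + (\<Sum>l<y. h (x + l))"
  for h :: "nat \<Rightarrow> 'z::comm_monoid_add"
  by (induction y) (simp_all add: ac_simps)

lemma block3_mult_general:
  assumes X: "blocks_carrier m a b X" and Y: "blocks_carrier m a b Y"
  shows "block3 m a b X * block3 m a b Y = block3 m a b
    (map (\<lambda>u. map (\<lambda>v. X ! u ! 0 * Y ! 0 ! v + X ! u ! 1 * Y ! 1 ! v + X ! u ! 2 * Y ! 2 ! v) [0, 1, 2]) [0, 1, 2])"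
    (is "_ = block3 m a b ?Z")
proof (rule eq_matI)
  fix i j assume "i < dim_row (block3 m a b ?Z)" "j < dim_col (block3 m a b ?Z)"
  then have i: "i < m + a + b" and j: "j < m + a + b" by auto
  define u where "u = blk m a i"
  define v where "v = blk m a j"
  define i' where "i' = i - blk_off m a u"
  define j' where "j' = j - blk_off m a v"
  have uv: "u < 3" "v < 3"
    using blk_less_3 u_def v_def by auto
  have ij': "i' < [m, a, b] ! u" "j' < [m, a, b] ! v"
    using blk_local_index[OF i] blk_local_index[OF j] unfolding i'_def j'_def u_def v_def by auto
  have c: "X ! u ! w \<in> carrier_mat ([m, a, b] ! u) ([m, a, b] ! w)"
    "Y ! w ! v \<in> carrier_mat ([m, a, b] ! w) ([m, a, b] ! v)" if "w < 3" for w
    using X Y uv that unfolding blocks_carrier_def by auto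
  have "(block3 m a b X * block3 m a b Y) $$ (i, j) =
      (\<Sum>l<m + a + b. block3 m a b X $$ (i, l) * block3 m a b Y $$ (l, j))"
    using i j by (simp add: scalar_prod_def lessThan_atLeast0)
  also have "\<dots> = (\<Sum>l<m. X ! u ! 0 $$ (i', l) * Y ! 0 ! v $$ (l, j'))
      + (\<Sum>l<a. X ! u ! 1 $$ (i', l) * Y ! 1 ! v $$ (l, j'))
      + (\<Sum>l<b. X ! u ! 2 $$ (i', l) * Y ! 2 ! v $$ (l, j'))"
    unfolding sum_lessThan_add using i j
    by (simp add: block3_index flip: u_def v_def i'_def j'_def) (simp add: blk_def blk_off_def)
  also have "\<dots> = (X ! u ! 0 * Y ! 0 ! v + X ! u ! 1 * Y ! 1 ! v + X ! u ! 2 * Y ! 2 ! v) $$ (i', j')"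
    using c[of 0] c[of 1] c[of 2] ij'
    by (simp add: scalar_prod_def lessThan_atLeast0 del: assoc_add_mat)
  also have "\<dots> = (?Z ! u ! v) $$ (i', j')"
    using uv by (auto dest!: less_3_cases)
  also have "\<dots> = block3 m a b ?Z $$ (i, j)"
    using i j by (simp add: block3_index flip: u_def v_def i'_def j'_def)
  finally show "(block3 m a b X * block3 m a b Y) $$ (i, j) = block3 m a b ?Z $$ (i, j)" .
qed auto

lemma block3_mult:
  assumes "x00 \<in> carrier_mat m m" "x01 \<in> carrier_mat m a" "x02 \<in> carrier_mat m b"
    "x10 \<in> carrier_mat a m" "x11 \<in> carrier_mat a a" "x12 \<in> carrier_mat a b"
    "x20 \<in> carrier_mat b m" "x21 \<in> carrier_mat b a" "x22 \<in> carrier_mat b b"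
    and "y00 \<in> carrier_mat m m" "y01 \<in> carrier_mat m a" "y02 \<in> carrier_mat m b"
    "y10 \<in> carrier_mat a m" "y11 \<in> carrier_mat a a" "y12 \<in> carrier_mat a b"
    "y20 \<in> carrier_mat b m" "y21 \<in> carrier_mat b a" "y22 \<in> carrier_mat b b"
  shows "block3 m a b [[x00, x01, x02], [x10, x11, x12], [x20, x21, x22]] *
      block3 m a b [[y00, y01, y02], [y10, y11, y12], [y20, y21, y22]] = block3 m a b
    [[x00 * y00 + x01 * y10 + x02 * y20, x00 * y01 + x01 * y11 + x02 * y21, x00 * y02 + x01 * y12 + x02 * y22],
     [x10 * y00 + x11 * y10 + x12 * y20, x10 * y01 + x11 * y11 + x12 * y21, x10 * y02 + x11 * y12 + x12 * y22],
     [x20 * y00 + x21 * y10 + x22 * y20, x20 * y01 + x21 * y11 + x22 * y21, x20 * y02 + x21 * y12 + x22 * y22]]"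
  by (simp add: block3_mult_general blocks_carrier_literal assms)

lemma block3_add:
  assumes "y00 \<in> carrier_mat m m" "y01 \<in> carrier_mat m a" "y02 \<in> carrier_mat m b"
    "y10 \<in> carrier_mat a m" "y11 \<in> carrier_mat a a" "y12 \<in> carrier_mat a b"
    "y20 \<in> carrier_mat b m" "y21 \<in> carrier_mat b a" "y22 \<in> carrier_mat b b"
  shows "block3 m a b [[x00, x01, x02], [x10, x11, x12], [x20, x21, x22]] +
      block3 m a b [[y00, y01, y02], [y10, y11, y12], [y20, y21, y22]] = block3 m a b
    [[x00 + y00, x01 + y01, x02 + y02], [x10 + y10, x11 + y11, x12 + y12], [x20 + y20, x21 + y21, x22 + y22]]"
    (is "?L = ?R")
proof (rule eq_matI)
  fix i j assume "i < dim_row ?R" "j < dim_col ?R"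
  then have ij: "i < m + a + b" "j < m + a + b" by auto
  show "?L $$ (i, j) = ?R $$ (i, j)"
    using ij blk_less_3[of m a i] blk_less_3[of m a j] blk_local_index[OF ij(1)] blk_local_index[OF ij(2)] assms
    by (auto simp: block3_index dest!: less_3_cases)
qed auto

lemma adj_block3:
  assumes "x00 \<in> carrier_mat m m" "x01 \<in> carrier_mat m a" "x02 \<in> carrier_mat m b"
    "x10 \<in> carrier_mat a m" "x11 \<in> carrier_mat a a" "x12 \<in> carrier_mat a b"
    "x20 \<in> carrier_mat b m" "x21 \<in> carrier_mat b a" "x22 \<in> carrier_mat b b"
  shows "adj (block3 m a b [[x00, x01, x02], [x10, x11, x12], [x20, x21, x22]]) = block3 m a b
    [[adj x00, adj x10, adj x20], [adj x01, adj x11, adj x21], [adj x02, adj x12, adj x22]]"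
    (is "?L = ?R")
proof (rule eq_matI)
  fix i j assume "i < dim_row ?R" "j < dim_col ?R"
  then have ij: "i < m + a + b" "j < m + a + b" by auto
  show "?L $$ (i, j) = ?R $$ (i, j)"
    using ij blk_less_3[of m a i] blk_less_3[of m a j] blk_local_index[OF ij(1)] blk_local_index[OF ij(2)] assms
    by (auto simp: block3_index dest!: less_3_cases)
qed auto

lemma one_mat_block3: "1\<^sub>m (m + a + b) = block3 m a b
    [[1\<^sub>m m, 0\<^sub>m m a, 0\<^sub>m m b], [0\<^sub>m a m, 1\<^sub>m a, 0\<^sub>m a b], [0\<^sub>m b m, 0\<^sub>m b a, 1\<^sub>m b]]"
  and zero_mat_block3: "0\<^sub>m (m + a + b) (m + a + b) = block3 m a b
    [[0\<^sub>m m m, 0\<^sub>m m a, 0\<^sub>m m b], [0\<^sub>m a m, 0\<^sub>m a a, 0\<^sub>m a b], [0\<^sub>m b m, 0\<^sub>m b a, 0\<^sub>m b b]]"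
  by (intro eq_matI; auto simp: block3_index blk_def blk_off_def)+

lemma block3_index_off_diagonal:
  "i < m \<Longrightarrow> m \<le> j \<Longrightarrow> j < m + a \<Longrightarrow>
    block3 m a b [[x00, x01, x02], [x10, x11, x12], [x20, x21, x22]] $$ (i, j) = x01 $$ (i, j - m)"
  "m \<le> i \<Longrightarrow> i < m + a \<Longrightarrow> m + a \<le> j \<Longrightarrow> j < m + a + b \<Longrightarrow>
    block3 m a b [[x00, x01, x02], [x10, x11, x12], [x20, x21, x22]] $$ (i, j) = x12 $$ (i - m, j - (m + a))"
  "m + a \<le> i \<Longrightarrow> i < m + a + b \<Longrightarrow> j < m \<Longrightarrow>
    block3 m a b [[x00, x01, x02], [x10, x11, x12], [x20, x21, x22]] $$ (i, j) = x20 $$ (i - (m + a), j)"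
  by (auto simp: block3_index blk_def blk_off_def)


section \<open>Entrywise limits of matrices\<close>

definition tendsto_entrywise :: "('b \<Rightarrow> 'a::topological_space mat) \<Rightarrow> 'a mat \<Rightarrow> 'b filter \<Rightarrow> bool" where
  "tendsto_entrywise f G F \<longleftrightarrow>
     (\<forall>i<dim_row G. \<forall>j<dim_col G. ((\<lambda>k. f k $$ (i, j)) \<longlongrightarrow> G $$ (i, j)) F)"

lemma tendsto_entrywiseD:
  "tendsto_entrywise f G F \<Longrightarrow> i < dim_row G \<Longrightarrow> j < dim_col G \<Longrightarrow> ((\<lambda>k. f k $$ (i, j)) \<longlongrightarrow> G $$ (i, j)) F"
  unfolding tendsto_entrywise_def by blast

lemma tendsto_entrywise_cong:
  "\<forall>\<^sub>F k in F. f k = g k \<Longrightarrow> tendsto_entrywise f G F \<Longrightarrow> tendsto_entrywise g G F"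
  unfolding tendsto_entrywise_def
proof (intro allI impI)
  fix i j assume "\<forall>\<^sub>F k in F. f k = g k"
    and "\<forall>i<dim_row G. \<forall>j<dim_col G. ((\<lambda>k. f k $$ (i, j)) \<longlongrightarrow> G $$ (i, j)) F"
    and "i < dim_row G" "j < dim_col G"
  moreover have "\<forall>\<^sub>F k in F. f k $$ (i, j) = g k $$ (i, j)"
    using \<open>\<forall>\<^sub>F k in F. f k = g k\<close> by (rule eventually_mono) simp
  ultimately show "((\<lambda>k. g k $$ (i, j)) \<longlongrightarrow> G $$ (i, j)) F"
    by (simp add: tendsto_cong[symmetric])
qed

lemma det_tendsto:
  fixes f :: "'b \<Rightarrow> 'a::real_normed_field mat"
  assumes f: "\<And>k. f k \<in> carrier_mat n n" and G: "G \<in> carrier_mat n n"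
    and lim: "tendsto_entrywise f G F"
  shows "((\<lambda>k. det (f k)) \<longlongrightarrow> det G) F"
proof -
  have "(\<lambda>k. det (f k)) = (\<lambda>k. \<Sum>p\<in>{p. p permutes {0..<n}}. signof p * (\<Prod>i = 0..<n. f k $$ (i, p i)))"
    using det_def'[OF f] by auto
  show ?thesis unfolding \<open>(\<lambda>k. det (f k)) = _\<close> det_def'[OF G]
  proof (intro tendsto_sum tendsto_mult tendsto_const tendsto_prod)
    fix p i assume "p \<in> {p. p permutes {0..<n}}" "i \<in> {0..<n}"
    then have "i < n" "p i < n" using permutes_in_image[of p "{0..<n}" i] by auto
    then show "((\<lambda>k. f k $$ (i, p i)) \<longlongrightarrow> G $$ (i, p i)) F"
      using lim G by (auto simp: tendsto_entrywise_def)
  qed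
qed

lemma adj_mat_tendsto:
  fixes f :: "'b \<Rightarrow> 'a::real_normed_field mat"
  assumes f: "\<And>k. f k \<in> carrier_mat n n" and G: "G \<in> carrier_mat n n"
    and lim: "tendsto_entrywise f G F"
  shows "tendsto_entrywise (\<lambda>k. adj_mat (f k)) (adj_mat G) F"
  unfolding tendsto_entrywise_def
proof (intro allI impI)
  fix i j assume "i < dim_row (adj_mat G)" "j < dim_col (adj_mat G)"
  then have ij: "i < n" "j < n" using adj_mat(1)[OF G] by auto
  have cofactor: "adj_mat A $$ (i, j) = (-1) ^ (j + i) * det (mat_delete A j i)" if "A \<in> carrier_mat n n" for A
    using ij that by (simp add: adj_mat_def cofactor_def)
  have "((\<lambda>k. det (mat_delete (f k) j i)) \<longlongrightarrow> det (mat_delete G j i)) F"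
  proof (rule det_tendsto[of _ "n - 1"])
    show "mat_delete (f k) j i \<in> carrier_mat (n - 1) (n - 1)" for k
      using mat_delete_carrier[OF f] by simp
    show "mat_delete G j i \<in> carrier_mat (n - 1) (n - 1)"
      using mat_delete_carrier[OF G] by simp
    have entry: "mat_delete A j i $$ (i', j') =
        A $$ (if i' < j then i' else Suc i', if j' < i then j' else Suc j')"
      if "A \<in> carrier_mat n n" "i' < n - 1" "j' < n - 1" for A i' j'
      using that unfolding mat_delete_def by auto
    show "tendsto_entrywise (\<lambda>k. mat_delete (f k) j i) (mat_delete G j i) F"
      unfolding tendsto_entrywise_def
    proof (intro allI impI)
      fix i' j' assume "i' < dim_row (mat_delete G j i)" "j' < dim_col (mat_delete G j i)"
      then have ij': "i' < n - 1" "j' < n - 1" using G by auto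
      have "((\<lambda>k. f k $$ (i'', j'')) \<longlongrightarrow> G $$ (i'', j'')) F" if "i'' < n" "j'' < n" for i'' j''
        using lim G that by (simp add: tendsto_entrywise_def)
      then show "((\<lambda>k. mat_delete (f k) j i $$ (i', j')) \<longlongrightarrow> mat_delete G j i $$ (i', j')) F"
        unfolding entry[OF f ij'] entry[OF G ij'] using ij' by simp
    qed
  qed
  then show "((\<lambda>k. adj_mat (f k) $$ (i, j)) \<longlongrightarrow> adj_mat G $$ (i, j)) F"
    unfolding cofactor[OF f] cofactor[OF G] by (intro tendsto_mult tendsto_const)
qed

lemma inverse_via_adj_mat:
  fixes A :: "'a::field mat"
  assumes A: "A \<in> carrier_mat n n" and "det A \<noteq> 0"
  shows "A * ((1 / det A) \<cdot>\<^sub>m adj_mat A) = 1\<^sub>m n" "(1 / det A) \<cdot>\<^sub>m adj_mat A \<in> carrier_mat n n"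
  using adj_mat[OF A] A \<open>det A \<noteq> 0\<close> by (auto simp: mult_smult_distrib)

lemma inverse_tendsto:
  fixes f :: "'b \<Rightarrow> 'a::real_normed_field mat"
  assumes f: "\<And>k. f k \<in> carrier_mat n n" and G: "G \<in> carrier_mat n n"
    and lim: "tendsto_entrywise f G F"
    and Gi: "Gi \<in> carrier_mat n n" and G_Gi: "G * Gi = 1\<^sub>m n"
  shows "\<forall>\<^sub>F k in F. det (f k) \<noteq> 0"
    and "tendsto_entrywise (\<lambda>k. (1 / det (f k)) \<cdot>\<^sub>m adj_mat (f k)) Gi F"
proof -
  have det_G: "det G \<noteq> 0" using det_mult[OF G Gi] G_Gi by auto
  have lim_det: "((\<lambda>k. det (f k)) \<longlongrightarrow> det G) F" by (rule det_tendsto[OF f G lim])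
  show "\<forall>\<^sub>F k in F. det (f k) \<noteq> 0" using tendsto_imp_eventually_ne[OF lim_det det_G] .
  have Gi_eq: "Gi = (1 / det G) \<cdot>\<^sub>m adj_mat G"
  proof -
    have "(1 / det G) \<cdot>\<^sub>m adj_mat G = (1 / det G) \<cdot>\<^sub>m ((adj_mat G * G) * Gi)"
      using G_Gi adj_mat(1)[OF G] G Gi by simp
    also have "\<dots> = Gi"
      using adj_mat(3)[OF G] Gi det_G mult_smult_assoc_mat[of "1\<^sub>m n" n n Gi n "det G"] by simp
    finally show ?thesis ..
  qed
  have lim_adj: "tendsto_entrywise (\<lambda>k. adj_mat (f k)) (adj_mat G) F"
    by (rule adj_mat_tendsto[OF f G lim])
  show "tendsto_entrywise (\<lambda>k. (1 / det (f k)) \<cdot>\<^sub>m adj_mat (f k)) Gi F"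
    unfolding tendsto_entrywise_def
  proof (intro allI impI)
    fix i j assume "i < dim_row Gi" "j < dim_col Gi"
    then have "((\<lambda>k. (1 / det (f k)) * adj_mat (f k) $$ (i, j)) \<longlongrightarrow> (1 / det G) * adj_mat G $$ (i, j)) F"
      using lim_adj Gi_eq adj_mat(1)[OF G] det_G
      by (intro tendsto_mult tendsto_divide tendsto_const lim_det) (auto simp: tendsto_entrywise_def)
    then show "((\<lambda>k. ((1 / det (f k)) \<cdot>\<^sub>m adj_mat (f k)) $$ (i, j)) \<longlongrightarrow> Gi $$ (i, j)) F"
      using Gi_eq \<open>i < dim_row Gi\<close> \<open>j < dim_col Gi\<close> adj_mat(1)[OF G]
        carrier_matD[OF adj_mat(1)[OF f]] by simp
  qed
qed

lemma tendsto_entrywise_mult_const: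
  fixes f :: "'b \<Rightarrow> 'a::real_normed_field mat"
  assumes A: "A \<in> carrier_mat n n" and B: "B \<in> carrier_mat n n"
    and f: "\<And>k. f k \<in> carrier_mat n n" and G: "G \<in> carrier_mat n n"
    and lim: "tendsto_entrywise f G F"
  shows "tendsto_entrywise (\<lambda>k. A * f k * B) (A * G * B) F"
  unfolding tendsto_entrywise_def
proof (intro allI impI)
  fix i j assume "i < dim_row (A * G * B)" "j < dim_col (A * G * B)"
  then have ij: "i < n" "j < n" using A B by auto
  have entry: "(A * X * B) $$ (i, j) = (\<Sum>l<n. (\<Sum>l'<n. A $$ (i, l') * X $$ (l', l)) * B $$ (l, j))"
    if "X \<in> carrier_mat n n" for X
  proof -
    have "(A * X * B) $$ (i, j) = (\<Sum>l<n. (A * X) $$ (i, l) * B $$ (l, j))"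
      using A B that ij by (intro mult_mat_index_sum) auto
    then show ?thesis
      using A that ij by (auto simp: scalar_prod_def lessThan_atLeast0 intro!: sum.cong)
  qed
  show "((\<lambda>k. (A * f k * B) $$ (i, j)) \<longlongrightarrow> (A * G * B) $$ (i, j)) F"
    unfolding entry[OF f] entry[OF G]
    using lim G by (intro tendsto_sum tendsto_mult tendsto_const) (auto simp: tendsto_entrywise_def)
qed

lemma tendsto_entrywise_add_smult:
  fixes f :: "'b \<Rightarrow> 'a::real_normed_field mat"
  assumes "A \<in> carrier_mat r c" "\<And>k. f k \<in> carrier_mat r c" "G \<in> carrier_mat r c"
    and "tendsto_entrywise f G F"
  shows "tendsto_entrywise (\<lambda>k. A + x \<cdot>\<^sub>m f k) (A + x \<cdot>\<^sub>m G) F"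
  unfolding tendsto_entrywise_def
proof (intro allI impI)
  fix i j assume "i < dim_row (A + x \<cdot>\<^sub>m G)" "j < dim_col (A + x \<cdot>\<^sub>m G)"
  then have ij: "i < r" "j < c" using assms(1,3) by auto
  have "((\<lambda>k. A $$ (i, j) + x * f k $$ (i, j)) \<longlongrightarrow> A $$ (i, j) + x * G $$ (i, j)) F"
    using assms(3,4) ij by (intro tendsto_add tendsto_mult_left tendsto_const) (auto simp: tendsto_entrywise_def)
  then show "((\<lambda>k. (A + x \<cdot>\<^sub>m f k) $$ (i, j)) \<longlongrightarrow> (A + x \<cdot>\<^sub>m G) $$ (i, j)) F"
    using assms(1,3) carrier_matD[OF assms(2)] ij by simp
qed

lemma tendsto_entrywise_uminus:
  fixes f :: "'b \<Rightarrow> 'a::real_normed_field mat"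
  assumes "\<And>k. f k \<in> carrier_mat r c" "G \<in> carrier_mat r c" "tendsto_entrywise f G F"
  shows "tendsto_entrywise (\<lambda>k. - f k) (- G) F"
  unfolding tendsto_entrywise_def
proof (intro allI impI)
  fix i j assume "i < dim_row (- G)" "j < dim_col (- G)"
  then have ij: "i < r" "j < c" using assms(2) by auto
  have "((\<lambda>k. - f k $$ (i, j)) \<longlongrightarrow> - G $$ (i, j)) F"
    using assms(2,3) ij by (intro tendsto_minus) (auto simp: tendsto_entrywise_def)
  then show "((\<lambda>k. (- f k) $$ (i, j)) \<longlongrightarrow> (- G) $$ (i, j)) F"
    using assms(2) carrier_matD[OF assms(1)] ij by simp
qed


section \<open>A Cayley-type transform and its limit\<close>

lemma minv_eqI:
  fixes C W :: "complex mat"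
  assumes C: "C \<in> carrier_mat N N" and W: "W \<in> carrier_mat N N" and C_W: "C * W = 1\<^sub>m N"
  shows "minv C = W"
proof -
  have "C \<in> Units (ring_mat TYPE(complex) N undefined)"
    unfolding Units_def ring_mat_simps using C W C_W mat_mult_left_right_inverse[OF C W C_W] by auto
  then obtain V where V: "mat_inverse C = Some V"
    using mat_inverse(1)[OF C] by fastforce
  from mat_inverse(2)[OF C V] have V_C: "V * C = 1\<^sub>m N" and V_carrier: "V \<in> carrier_mat N N" by auto
  have "V = (V * C) * W" using C_W V_carrier C W by (simp add: assoc_mult_mat)
  then show ?thesis using V_C W V unfolding minv_def by simp
qed

lemma minv_mult_eq:
  fixes E Ei C Z X D :: "complex mat"
  assumes E: "E \<in> carrier_mat N N" and Ei: "Ei \<in> carrier_mat N N" and E_Ei: "E * Ei = 1\<^sub>m N"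
    and C: "C \<in> carrier_mat N N" and Z: "Z \<in> carrier_mat N N" and X: "X \<in> carrier_mat N N"
    and C_Z: "C * Z = 1\<^sub>m N" and C_X: "C * X = D"
  shows "minv (E * C) * (E * D) = X"
proof -
  have "(E * C) * (Z * Ei) = E * ((C * Z) * Ei)"
    using E C Z Ei assoc_mult_mat[of E N N C N "Z * Ei" N] by (simp add: assoc_mult_mat[of C N N Z N Ei N])
  then have "minv (E * C) = Z * Ei"
    using E_Ei E C Z Ei C_Z by (intro minv_eqI) auto
  moreover have "Ei * E = 1\<^sub>m N" "Z * C = 1\<^sub>m N"
    using mat_mult_left_right_inverse E Ei E_Ei C Z C_Z by auto
  moreover have "D \<in> carrier_mat N N" using C_X C X by auto
  ultimately have "minv (E * C) * (E * D) = Z * ((Ei * E) * D)"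
    using E Ei Z assoc_mult_mat[of Ei N N E N D N] by (simp add: assoc_mult_mat[of Z N N Ei N "E * D" N])
  also have "\<dots> = (Z * C) * X"
    using \<open>Ei * E = 1\<^sub>m N\<close> Z C X by (simp add: C_X[symmetric] assoc_mult_mat[of Z N N C N X N])
  also have "\<dots> = X"
    using \<open>Z * C = 1\<^sub>m N\<close> X by simp
  finally show ?thesis .
qed


locale cayley_factors =
  fixes N :: nat and K Sg Om Pi :: "complex mat"
  assumes K: "K \<in> carrier_mat N N" and Sg: "Sg \<in> carrier_mat N N"
    and Om: "Om \<in> carrier_mat N N" and Pi: "Pi \<in> carrier_mat N N"
    and Pi_K: "Pi * K = 0\<^sub>m N N" and Pi_Sg: "Pi * Sg = 0\<^sub>m N N" and Pi_Pi: "Pi * Pi = Pi"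
    and Om_adj_K: "Om * adj K = 0\<^sub>m N N" and Sg_adj_K: "Sg * adj K = Sg"
    and Sg_Pi: "Sg * Pi = 0\<^sub>m N N" and Om_Pi: "Om * Pi = Pi"
begin

definition shifted_gram :: "complex \<Rightarrow> complex mat" where
  "shifted_gram w = K * adj K + Pi - w \<cdot>\<^sub>m Sg"

definition cayley_approx :: "complex \<Rightarrow> complex mat" where
  "cayley_approx w = - 1\<^sub>m N + 2 \<cdot>\<^sub>m
    (adj K * ((1 / det (shifted_gram w)) \<cdot>\<^sub>m adj_mat (shifted_gram w)) * K)"

lemma shifted_gram_carrier: "shifted_gram w \<in> carrier_mat N N"
  unfolding shifted_gram_def using K Pi Sg by (auto intro!: minus_carrier_mat)

lemma cayley_identities:
  fixes Mi :: "complex mat" and z w :: complex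
  assumes Mi: "Mi \<in> carrier_mat N N" and zw: "z * w = 1"
    and gram_Mi: "shifted_gram w * Mi = 1\<^sub>m N"
  shows "(z \<cdot>\<^sub>m K - Sg - Om) * (w \<cdot>\<^sub>m (adj K * Mi) - Pi + adj K * Mi * K * Pi) = 1\<^sub>m N"
    and "(z \<cdot>\<^sub>m K - Sg - Om) * (- 1\<^sub>m N + 2 \<cdot>\<^sub>m (adj K * Mi * K)) = z \<cdot>\<^sub>m K + Sg + Om"
proof -
  have M_Mi: "(K * adj K + Pi - w \<cdot>\<^sub>m Sg) * Mi = 1\<^sub>m N" using gram_Mi unfolding shifted_gram_def .
  have adj_K: "adj K \<in> carrier_mat N N" using K by simp
  note dims [simp] = carrier_matD[OF K] carrier_matD[OF Sg] carrier_matD[OF Om] carrier_matD[OF Pi]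
    carrier_matD[OF Mi] carrier_matD[OF adj_K]
  have closed: "\<And>(A::complex mat) B. A \<in> carrier_mat N N \<Longrightarrow> B \<in> carrier_mat N N \<Longrightarrow> A * B \<in> carrier_mat N N"
    "\<And>A B. B \<in> carrier_mat N N \<Longrightarrow> A + B \<in> carrier_mat N N"
    "\<And>A B. B \<in> carrier_mat N N \<Longrightarrow> A - B \<in> carrier_mat N N"
    "\<And>A c. A \<in> carrier_mat N N \<Longrightarrow> c \<cdot>\<^sub>m A \<in> carrier_mat N N"
    "\<And>A. A \<in> carrier_mat N N \<Longrightarrow> - A \<in> carrier_mat N N"
    by (auto intro: minus_carrier_mat)
  note ring_laws = mult_add_distrib_mat[of _ N N _ N] mult_minus_distrib_mat[of _ N N _ N]
    add_mult_distrib_mat[of _ N N _ _ N] minus_mult_distrib_mat[of _ N N _ _ N]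
    mult_smult_distrib[of _ N N _ N] mult_smult_assoc_mat[of _ N N _ N] assoc_mult_mat[of _ N N _ N _ N]
  define M where "M = K * adj K + Pi - w \<cdot>\<^sub>m Sg"
  define C where "C = z \<cdot>\<^sub>m K - Sg - Om"
  have M: "M \<in> carrier_mat N N" unfolding M_def using K Pi Sg by (auto intro!: minus_carrier_mat)
  have C: "C \<in> carrier_mat N N" unfolding C_def using K Om Sg by (auto intro!: minus_carrier_mat)
  have Pi_M: "Pi * M = Pi"
  proof -
    have "Pi * M = Pi * K * adj K + Pi * Pi - w \<cdot>\<^sub>m (Pi * Sg)"
      unfolding M_def using K Pi Sg adj_K by (simp add: ring_laws closed)
    then show ?thesis using Pi_K Pi_Sg Pi_Pi Pi by simp
  qed
  have Pi_Mi: "Pi * Mi = Pi"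
  proof -
    have "Pi * Mi = Pi * (M * Mi)" using Pi_M Pi M Mi by (simp flip: assoc_mult_mat[of Pi N N M N Mi N])
    then show ?thesis using M_Mi Pi unfolding M_def by simp
  qed
  have zw': "\<And>s. z * (w * s) = s" using zw by (simp add: mult.assoc[symmetric])
  have C_adj_K: "C * adj K = z \<cdot>\<^sub>m (M - Pi)"
  proof -
    have "C * adj K = z \<cdot>\<^sub>m (K * adj K) - Sg * adj K - Om * adj K"
      unfolding C_def using K Sg Om adj_K by (simp add: ring_laws closed)
    also have "\<dots> = z \<cdot>\<^sub>m (K * adj K) - Sg" using Sg_adj_K Om_adj_K by simp
    also have "\<dots> = z \<cdot>\<^sub>m (M - Pi)"
      unfolding M_def using K Sg Pi by (intro eq_matI) (simp_all add: right_diff_distrib zw')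
    finally show ?thesis .
  qed
  have C_adj_K_Mi: "C * adj K * Mi = z \<cdot>\<^sub>m (1\<^sub>m N - Pi)"
  proof -
    have "C * adj K * Mi = z \<cdot>\<^sub>m ((M - Pi) * Mi)" using C_adj_K M Pi Mi by (simp add: ring_laws closed)
    also have "(M - Pi) * Mi = 1\<^sub>m N - Pi" using M Pi Mi M_Mi Pi_Mi unfolding M_def by (simp add: ring_laws closed)
    finally show ?thesis .
  qed
  have C_Pi: "C * Pi = z \<cdot>\<^sub>m (K * Pi) - Pi"
    unfolding C_def using K Sg Om Pi Sg_Pi Om_Pi by (simp add: ring_laws closed)
  have "C * (w \<cdot>\<^sub>m (adj K * Mi) - Pi + adj K * Mi * K * Pi)
      = w \<cdot>\<^sub>m (C * adj K * Mi) - C * Pi + (C * adj K * Mi) * (K * Pi)"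
    using C adj_K Mi K Pi by (simp add: ring_laws closed)
  also have "(C * adj K * Mi) * (K * Pi) = z \<cdot>\<^sub>m (K * Pi)"
    unfolding C_adj_K_Mi using K Pi Pi_K by (simp add: ring_laws closed flip: assoc_mult_mat[of Pi N N K N Pi N])
  also have "w \<cdot>\<^sub>m (C * adj K * Mi) - C * Pi + z \<cdot>\<^sub>m (K * Pi) = 1\<^sub>m N"
    unfolding C_adj_K_Mi C_Pi using K Pi
    by (intro eq_matI) (simp_all add: right_diff_distrib zw' mult.assoc[symmetric] mult.commute[of w z] zw)
  finally show "(z \<cdot>\<^sub>m K - Sg - Om) * (w \<cdot>\<^sub>m (adj K * Mi) - Pi + adj K * Mi * K * Pi) = 1\<^sub>m N"
    unfolding C_def .
  have "C * (- 1\<^sub>m N + 2 \<cdot>\<^sub>m (adj K * Mi * K)) = - C + 2 \<cdot>\<^sub>m (C * adj K * Mi * K)"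
    using C adj_K Mi K by (simp add: ring_laws closed)
  also have "C * adj K * Mi * K = z \<cdot>\<^sub>m K"
    unfolding C_adj_K_Mi using K Pi Pi_K by (simp add: ring_laws closed)
  also have "- C + 2 \<cdot>\<^sub>m (z \<cdot>\<^sub>m K) = z \<cdot>\<^sub>m K + Sg + Om"
    unfolding C_def using K Pi Sg Om by (intro eq_matI) (simp_all add: algebra_simps)
  finally show "(z \<cdot>\<^sub>m K - Sg - Om) * (- 1\<^sub>m N + 2 \<cdot>\<^sub>m (adj K * Mi * K)) = z \<cdot>\<^sub>m K + Sg + Om"
    unfolding C_def .
qed


lemma minv_cayley_eq:
  fixes E Ei :: "complex mat" and z w :: complex
  assumes zw: "z * w = 1" and det: "det (shifted_gram w) \<noteq> 0"
    and E: "E \<in> carrier_mat N N" and Ei: "Ei \<in> carrier_mat N N" and E_Ei: "E * Ei = 1\<^sub>m N"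
  shows "minv (E * (z \<cdot>\<^sub>m K - Sg - Om)) * (E * (z \<cdot>\<^sub>m K + Sg + Om)) = cayley_approx w"
proof -
  note Mi = inverse_via_adj_mat[OF shifted_gram_carrier det]
  note identities = cayley_identities[OF Mi(2) zw Mi(1)]
  show ?thesis
    unfolding cayley_approx_def
    by (rule minv_mult_eq[OF E Ei E_Ei _ _ _ identities])
      (use K Sg Om Pi Mi(2) in \<open>auto intro!: minus_carrier_mat\<close>)
qed

lemma cayley_tendsto:
  fixes w :: "'b \<Rightarrow> complex" and Gi :: "complex mat"
  assumes w: "(w \<longlongrightarrow> 0) F"
    and Gi: "Gi \<in> carrier_mat N N" and G_Gi: "(K * adj K + Pi) * Gi = 1\<^sub>m N"
  shows "\<forall>\<^sub>F k in F. det (shifted_gram (w k)) \<noteq> 0"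
    and "tendsto_entrywise (\<lambda>k. cayley_approx (w k)) (- 1\<^sub>m N + 2 \<cdot>\<^sub>m (adj K * Gi * K)) F"
proof -
  have G: "K * adj K + Pi \<in> carrier_mat N N" using K Pi by auto
  have "tendsto_entrywise (\<lambda>k. shifted_gram (w k)) (K * adj K + Pi) F"
    unfolding tendsto_entrywise_def
  proof (intro allI impI)
    fix i j assume "i < dim_row (K * adj K + Pi)" "j < dim_col (K * adj K + Pi)"
    then have ij: "i < N" "j < N" using G by auto
    have "((\<lambda>k. (K * adj K + Pi) $$ (i, j) - w k * Sg $$ (i, j)) \<longlongrightarrow> (K * adj K + Pi) $$ (i, j) - 0 * Sg $$ (i, j)) F"
      by (intro tendsto_intros w)
    then show "((\<lambda>k. shifted_gram (w k) $$ (i, j)) \<longlongrightarrow> (K * adj K + Pi) $$ (i, j)) F"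
      unfolding shifted_gram_def using ij K Pi Sg by simp
  qed
  note lim_inverse = inverse_tendsto[OF shifted_gram_carrier G this Gi G_Gi]
  show "\<forall>\<^sub>F k in F. det (shifted_gram (w k)) \<noteq> 0" by (rule lim_inverse(1))
  show "tendsto_entrywise (\<lambda>k. cayley_approx (w k)) (- 1\<^sub>m N + 2 \<cdot>\<^sub>m (adj K * Gi * K)) F"
    unfolding cayley_approx_def using K Gi adj_mat(1)[OF shifted_gram_carrier]
    by (intro tendsto_entrywise_add_smult tendsto_entrywise_mult_const lim_inverse(2)) auto
qed

end


section \<open>Factorizations of the boundary condition\<close>

definition E_hi :: "nat \<Rightarrow> nat \<Rightarrow> nat \<Rightarrow> complex mat \<Rightarrow> complex mat" where
  "E_hi m a b R = block3 m a b [[1\<^sub>m m, 0\<^sub>m m a, 0\<^sub>m m b], [R, 1\<^sub>m a, 0\<^sub>m a b], [0\<^sub>m b m, 0\<^sub>m b a, 1\<^sub>m b]]"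

definition E_hi_inv :: "nat \<Rightarrow> nat \<Rightarrow> nat \<Rightarrow> complex mat \<Rightarrow> complex mat" where
  "E_hi_inv m a b R = block3 m a b [[1\<^sub>m m, 0\<^sub>m m a, 0\<^sub>m m b], [- R, 1\<^sub>m a, 0\<^sub>m a b], [0\<^sub>m b m, 0\<^sub>m b a, 1\<^sub>m b]]"

definition K_hi :: "nat \<Rightarrow> nat \<Rightarrow> nat \<Rightarrow> complex mat \<Rightarrow> complex mat \<Rightarrow> complex mat \<Rightarrow> complex mat" where
  "K_hi m a b P Q R = block3 m a b [[1\<^sub>m m, 0\<^sub>m m a, P], [0\<^sub>m a m, 1\<^sub>m a, Q - R * P], [0\<^sub>m b m, 0\<^sub>m b a, 0\<^sub>m b b]]"

definition Sigma_hi :: "nat \<Rightarrow> nat \<Rightarrow> nat \<Rightarrow> complex mat \<Rightarrow> complex mat \<Rightarrow> complex mat" where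
  "Sigma_hi m a b R S = block3 m a b
    [[S, - (S * adj R), 0\<^sub>m m b], [- (R * S), R * S * adj R, 0\<^sub>m a b], [0\<^sub>m b m, 0\<^sub>m b a, 0\<^sub>m b b]]"

definition Omega_hi :: "nat \<Rightarrow> nat \<Rightarrow> nat \<Rightarrow> complex mat \<Rightarrow> complex mat \<Rightarrow> complex mat \<Rightarrow> complex mat" where
  "Omega_hi m a b P Q R = block3 m a b
    [[0\<^sub>m m m, 0\<^sub>m m a, 0\<^sub>m m b], [0\<^sub>m a m, 0\<^sub>m a a, 0\<^sub>m a b], [- adj P, - adj (Q - R * P), 1\<^sub>m b]]"

definition Pi_hi :: "nat \<Rightarrow> nat \<Rightarrow> nat \<Rightarrow> complex mat" where
  "Pi_hi m a b = block3 m a b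
    [[0\<^sub>m m m, 0\<^sub>m m a, 0\<^sub>m m b], [0\<^sub>m a m, 0\<^sub>m a a, 0\<^sub>m a b], [0\<^sub>m b m, 0\<^sub>m b a, 1\<^sub>m b]]"

context
  fixes m a b :: nat and P Q R S :: "complex mat"
  assumes P: "P \<in> carrier_mat m b" and Q: "Q \<in> carrier_mat a b" and R: "R \<in> carrier_mat a m"
    and S: "S \<in> carrier_mat m m"
begin

lemmas carriers_hi = P Q R S carrier_matD[OF P] carrier_matD[OF Q] carrier_matD[OF R] carrier_matD[OF S]
  minus_carrier_mat

lemma E_hi_inverse: "E_hi m a b R * E_hi_inv m a b R = 1\<^sub>m (m + a + b)"
  unfolding E_hi_def E_hi_inv_def one_mat_block3
  by (subst block3_mult) (auto simp: carriers_hi)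

lemma E_hi_K_hi: "E_hi m a b R * K_hi m a b P Q R = B_PQRS m a b P Q R"
  unfolding E_hi_def K_hi_def B_PQRS_def
  by (subst block3_mult) (auto simp: carriers_hi)

lemma E_hi_Sigma_Omega_hi: "E_hi m a b R * (Sigma_hi m a b R S + Omega_hi m a b P Q R) = A_PQRS m a b P Q R S"
  unfolding E_hi_def Sigma_hi_def Omega_hi_def A_PQRS_def
  apply (subst block3_add)
           apply (auto simp: carriers_hi)[9]
  apply (subst block3_mult)
                    apply (auto simp: carriers_hi)[18]
  apply (auto simp: carriers_hi uminus_minus_mat)
  done

lemma adj_K_hi: "adj (K_hi m a b P Q R) = block3 m a b
    [[1\<^sub>m m, 0\<^sub>m m a, 0\<^sub>m m b], [0\<^sub>m a m, 1\<^sub>m a, 0\<^sub>m a b], [adj P, adj (Q - R * P), 0\<^sub>m b b]]"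
  unfolding K_hi_def by (subst adj_block3) (auto simp: carriers_hi simp del: adj_minus)

lemma cayley_factors_hi:
  "cayley_factors (m + a + b) (K_hi m a b P Q R) (Sigma_hi m a b R S) (Omega_hi m a b P Q R) (Pi_hi m a b)"
  unfolding cayley_factors_def zero_mat_block3 adj_K_hi
  unfolding K_hi_def Sigma_hi_def Omega_hi_def Pi_hi_def
  by (intro conjI; (subst block3_mult)?; auto simp: carriers_hi simp del: adj_minus)

end


definition E_lo :: "nat \<Rightarrow> nat \<Rightarrow> nat \<Rightarrow> complex mat \<Rightarrow> complex mat \<Rightarrow> complex mat" where
  "E_lo m a b P S = block3 m a b [[S, 0\<^sub>m m a, 0\<^sub>m m b], [0\<^sub>m a m, 1\<^sub>m a, 0\<^sub>m a b], [- adj P, 0\<^sub>m b a, 1\<^sub>m b]]"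

definition E_lo_inv :: "nat \<Rightarrow> nat \<Rightarrow> nat \<Rightarrow> complex mat \<Rightarrow> complex mat \<Rightarrow> complex mat" where
  "E_lo_inv m a b P Si = block3 m a b
    [[Si, 0\<^sub>m m a, 0\<^sub>m m b], [0\<^sub>m a m, 1\<^sub>m a, 0\<^sub>m a b], [adj P * Si, 0\<^sub>m b a, 1\<^sub>m b]]"

definition K_lo :: "nat \<Rightarrow> nat \<Rightarrow> nat \<Rightarrow> complex mat \<Rightarrow> complex mat \<Rightarrow> complex mat" where
  "K_lo m a b Q R = block3 m a b
    [[1\<^sub>m m, - adj R, 0\<^sub>m m b], [0\<^sub>m a m, 0\<^sub>m a a, 0\<^sub>m a b], [0\<^sub>m b m, - adj Q, 1\<^sub>m b]]"

definition Sigma_lo :: "nat \<Rightarrow> nat \<Rightarrow> nat \<Rightarrow> complex mat \<Rightarrow> complex mat \<Rightarrow> complex mat" where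
  "Sigma_lo m a b P Si = block3 m a b
    [[Si, 0\<^sub>m m a, Si * P], [0\<^sub>m a m, 0\<^sub>m a a, 0\<^sub>m a b], [adj P * Si, 0\<^sub>m b a, adj P * Si * P]]"

definition Omega_lo :: "nat \<Rightarrow> nat \<Rightarrow> nat \<Rightarrow> complex mat \<Rightarrow> complex mat \<Rightarrow> complex mat" where
  "Omega_lo m a b Q R = block3 m a b
    [[0\<^sub>m m m, 0\<^sub>m m a, 0\<^sub>m m b], [R, 1\<^sub>m a, Q], [0\<^sub>m b m, 0\<^sub>m b a, 0\<^sub>m b b]]"

definition Pi_lo :: "nat \<Rightarrow> nat \<Rightarrow> nat \<Rightarrow> complex mat" where
  "Pi_lo m a b = block3 m a b
    [[0\<^sub>m m m, 0\<^sub>m m a, 0\<^sub>m m b], [0\<^sub>m a m, 1\<^sub>m a, 0\<^sub>m a b], [0\<^sub>m b m, 0\<^sub>m b a, 0\<^sub>m b b]]"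

context
  fixes m a b :: nat and P Q R S Si :: "complex mat"
  assumes P: "P \<in> carrier_mat m b" and Q: "Q \<in> carrier_mat a b" and R: "R \<in> carrier_mat a m"
    and S: "S \<in> carrier_mat m m" and Si: "Si \<in> carrier_mat m m" and S_Si: "S * Si = 1\<^sub>m m"
begin

lemma S_Si_mult: "dim_row X = m \<Longrightarrow> S * (Si * X) = X"
proof -
  assume "dim_row X = m"
  then have "S * (Si * X) = (S * Si) * X"
    using S Si by (intro assoc_mult_mat[symmetric, of _ m m _ m _ "dim_col X"]) auto
  then show ?thesis using S_Si \<open>dim_row X = m\<close> by simp
qed

lemmas carriers_lo = P Q R S Si carrier_matD[OF P] carrier_matD[OF Q] carrier_matD[OF R]
  carrier_matD[OF S] carrier_matD[OF Si] minus_carrier_mat S_Si S_Si_mult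

lemma E_lo_inverse: "E_lo m a b P S * E_lo_inv m a b P Si = 1\<^sub>m (m + a + b)"
  unfolding E_lo_def E_lo_inv_def one_mat_block3
  by (subst block3_mult) (auto simp: carriers_lo)

lemma E_lo_K_lo: "E_lo m a b P S * K_lo m a b Q R = A_PQRS m a b P Q R S"
  unfolding E_lo_def K_lo_def A_PQRS_def
  by (subst block3_mult) (auto simp: carriers_lo)

lemma E_lo_Sigma_Omega_lo: "E_lo m a b P S * (Sigma_lo m a b P Si + Omega_lo m a b Q R) = B_PQRS m a b P Q R"
  unfolding E_lo_def Sigma_lo_def Omega_lo_def B_PQRS_def
  apply (subst block3_add)
           apply (auto simp: carriers_lo)[9]
  apply (subst block3_mult)
                    apply (auto simp: carriers_lo)[18]
  apply (auto simp: carriers_lo)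
  done

lemma adj_K_lo: "adj (K_lo m a b Q R) = block3 m a b
    [[1\<^sub>m m, 0\<^sub>m m a, 0\<^sub>m m b], [- R, 0\<^sub>m a a, - Q], [0\<^sub>m b m, 0\<^sub>m b a, 1\<^sub>m b]]"
  unfolding K_lo_def by (subst adj_block3) (auto simp: carriers_lo)

lemma cayley_factors_lo:
  "cayley_factors (m + a + b) (K_lo m a b Q R) (Sigma_lo m a b P Si) (Omega_lo m a b Q R) (Pi_lo m a b)"
  unfolding cayley_factors_def zero_mat_block3 adj_K_lo
  unfolding K_lo_def Sigma_lo_def Omega_lo_def Pi_lo_def
  by (intro conjI; (subst block3_mult)?; auto simp: carriers_lo)

end


section \<open>High and low energy limits of the scattering matrix\<close>

lemma pencil_factor_eqs:
  fixes E K Sg Om :: "complex mat" and c z :: complex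
  assumes E: "E \<in> carrier_mat N N" and K: "K \<in> carrier_mat N N"
    and Sg: "Sg \<in> carrier_mat N N" and Om: "Om \<in> carrier_mat N N"
  shows "- (E * (Sg + Om)) + c \<cdot>\<^sub>m (E * K) = E * (c \<cdot>\<^sub>m K - Sg - Om)"
    and "- (E * (Sg + Om)) - c \<cdot>\<^sub>m (E * K) = - (E * (c \<cdot>\<^sub>m K + Sg + Om))"
    and "c * z = 1 \<Longrightarrow> - (E * K) + c \<cdot>\<^sub>m (E * (Sg + Om)) = (- c) \<cdot>\<^sub>m E * (z \<cdot>\<^sub>m K - Sg - Om)"
    and "c * z = 1 \<Longrightarrow> - (E * K) - c \<cdot>\<^sub>m (E * (Sg + Om)) = (- c) \<cdot>\<^sub>m E * (z \<cdot>\<^sub>m K + Sg + Om)"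
proof -
  have sum: "E * (Sg + Om) = E * Sg + E * Om" by (rule mult_add_distrib_mat[OF E Sg Om])
  have minus: "E * (x \<cdot>\<^sub>m K - Sg - Om) = x \<cdot>\<^sub>m (E * K) - E * Sg - E * Om" for x
    using E K Sg Om
    by (simp add: mult_minus_distrib_mat[of E N N _ N] mult_smult_distrib[OF E K] minus_carrier_mat)
  have plus: "E * (x \<cdot>\<^sub>m K + Sg + Om) = x \<cdot>\<^sub>m (E * K) + E * Sg + E * Om" for x
    using E K Sg Om by (simp add: mult_add_distrib_mat[of E N N _ N] mult_smult_distrib[OF E K])
  have scale: "(- c) \<cdot>\<^sub>m E * X = (- c) \<cdot>\<^sub>m (E * X)" if "X \<in> carrier_mat N N" for X
    by (rule mult_smult_assoc_mat[OF E that])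
  have pencils: "x \<cdot>\<^sub>m K - Sg - Om \<in> carrier_mat N N" "x \<cdot>\<^sub>m K + Sg + Om \<in> carrier_mat N N" for x
    using K Sg Om by (auto intro!: minus_carrier_mat)
  have products: "E * K \<in> carrier_mat N N" "E * Sg \<in> carrier_mat N N" "E * Om \<in> carrier_mat N N"
    using E K Sg Om by auto
  have linear: "- (X2 + X3) + c \<cdot>\<^sub>m X1 = c \<cdot>\<^sub>m X1 - X2 - X3"
    "- (X2 + X3) - c \<cdot>\<^sub>m X1 = - (c \<cdot>\<^sub>m X1 + X2 + X3)"
    "c * z = 1 \<Longrightarrow> - X1 + c \<cdot>\<^sub>m (X2 + X3) = (- c) \<cdot>\<^sub>m (z \<cdot>\<^sub>m X1 - X2 - X3)"
    "c * z = 1 \<Longrightarrow> - X1 - c \<cdot>\<^sub>m (X2 + X3) = (- c) \<cdot>\<^sub>m (z \<cdot>\<^sub>m X1 + X2 + X3)"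
    if "X1 \<in> carrier_mat N N" "X2 \<in> carrier_mat N N" "X3 \<in> carrier_mat N N" for X1 X2 X3 :: "complex mat"
    using that by (intro eq_matI; auto simp: algebra_simps mult.assoc[symmetric])+
  show "- (E * (Sg + Om)) + c \<cdot>\<^sub>m (E * K) = E * (c \<cdot>\<^sub>m K - Sg - Om)"
    unfolding sum minus by (rule linear(1)[OF products])
  show "- (E * (Sg + Om)) - c \<cdot>\<^sub>m (E * K) = - (E * (c \<cdot>\<^sub>m K + Sg + Om))"
    unfolding sum plus by (rule linear(2)[OF products])
  show "c * z = 1 \<Longrightarrow> - (E * K) + c \<cdot>\<^sub>m (E * (Sg + Om)) = (- c) \<cdot>\<^sub>m E * (z \<cdot>\<^sub>m K - Sg - Om)"
    unfolding sum scale[OF pencils(1)] minus by (rule linear(3)[OF products])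
  show "c * z = 1 \<Longrightarrow> - (E * K) - c \<cdot>\<^sub>m (E * (Sg + Om)) = (- c) \<cdot>\<^sub>m E * (z \<cdot>\<^sub>m K + Sg + Om)"
    unfolding sum scale[OF pencils(2)] plus by (rule linear(4)[OF products])
qed


lemma scat_PQRS_eq_hi:
  fixes k :: real
  assumes P: "P \<in> carrier_mat m b" and Q: "Q \<in> carrier_mat a b" and R: "R \<in> carrier_mat a m"
    and S: "S \<in> carrier_mat m m"
  defines "z \<equiv> \<i> * complex_of_real k"
  shows "scat_PQRS m a b P Q R S k =
    minv (E_hi m a b R * (z \<cdot>\<^sub>m K_hi m a b P Q R - Sigma_hi m a b R S - Omega_hi m a b P Q R)) *
    (E_hi m a b R * (z \<cdot>\<^sub>m K_hi m a b P Q R + Sigma_hi m a b R S + Omega_hi m a b P Q R))"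
proof -
  have "E_hi m a b R \<in> carrier_mat (m + a + b) (m + a + b)" "K_hi m a b P Q R \<in> carrier_mat (m + a + b) (m + a + b)"
    "Sigma_hi m a b R S \<in> carrier_mat (m + a + b) (m + a + b)"
    "Omega_hi m a b P Q R \<in> carrier_mat (m + a + b) (m + a + b)"
    by (simp_all add: E_hi_def K_hi_def Sigma_hi_def Omega_hi_def)
  note factor_eqs = pencil_factor_eqs(1,2)[OF this]
  show ?thesis
    unfolding scat_PQRS_def Let_def z_def
      E_hi_Sigma_Omega_hi[OF P Q R S, symmetric] E_hi_K_hi[OF P Q R S, symmetric]
    by (simp add: factor_eqs mult_uminus_mat)
qed

lemma scat_PQRS_eq_lo:
  fixes k :: real
  assumes P: "P \<in> carrier_mat m b" and Q: "Q \<in> carrier_mat a b" and R: "R \<in> carrier_mat a m"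
    and S: "S \<in> carrier_mat m m" and Si: "Si \<in> carrier_mat m m" and S_Si: "S * Si = 1\<^sub>m m"
    and "k \<noteq> 0"
  defines "c \<equiv> - (\<i> * complex_of_real k)" and "z \<equiv> - \<i> * complex_of_real (inverse k)"
  shows "scat_PQRS m a b P Q R S k =
    - (minv (c \<cdot>\<^sub>m E_lo m a b P S * (z \<cdot>\<^sub>m K_lo m a b Q R - Sigma_lo m a b P Si - Omega_lo m a b Q R)) *
      (c \<cdot>\<^sub>m E_lo m a b P S * (z \<cdot>\<^sub>m K_lo m a b Q R + Sigma_lo m a b P Si + Omega_lo m a b Q R)))"
proof -
  have cz: "(\<i> * complex_of_real k) * z = 1"
    unfolding z_def using \<open>k \<noteq> 0\<close> by (simp add: field_simps flip: of_real_inverse)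
  have "E_lo m a b P S \<in> carrier_mat (m + a + b) (m + a + b)" "K_lo m a b Q R \<in> carrier_mat (m + a + b) (m + a + b)"
    "Sigma_lo m a b P Si \<in> carrier_mat (m + a + b) (m + a + b)"
    "Omega_lo m a b Q R \<in> carrier_mat (m + a + b) (m + a + b)"
    by (simp_all add: E_lo_def K_lo_def Sigma_lo_def Omega_lo_def)
  note factor_eqs = pencil_factor_eqs(3,4)[OF this cz]
  show ?thesis
    unfolding scat_PQRS_def Let_def c_def
      E_lo_Sigma_Omega_lo[OF P Q R S Si S_Si, symmetric] E_lo_K_lo[OF P Q R S Si S_Si, symmetric]
    by (simp add: factor_eqs)
qed


lemma scat_PQRS_tendsto_at_top:
  assumes P: "P \<in> carrier_mat m b" and Q: "Q \<in> carrier_mat a b" and R: "R \<in> carrier_mat a m"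
    and S: "S \<in> carrier_mat m m"
    and Gi: "Gi \<in> carrier_mat (m + a + b) (m + a + b)"
    and G_Gi: "(K_hi m a b P Q R * adj (K_hi m a b P Q R) + Pi_hi m a b) * Gi = 1\<^sub>m (m + a + b)"
  shows "tendsto_entrywise (scat_PQRS m a b P Q R S)
    (- 1\<^sub>m (m + a + b) + 2 \<cdot>\<^sub>m (adj (K_hi m a b P Q R) * Gi * K_hi m a b P Q R)) at_top"
proof -
  interpret cayley_factors "m + a + b" "K_hi m a b P Q R" "Sigma_hi m a b R S" "Omega_hi m a b P Q R" "Pi_hi m a b"
    by (rule cayley_factors_hi[OF P Q R S])
  define w where "w k = - \<i> * complex_of_real (inverse k)" for k :: real
  have "((\<lambda>k. complex_of_real (inverse k)) \<longlongrightarrow> complex_of_real 0) at_top"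
    by (intro tendsto_of_real tendsto_inverse_0_at_top filterlim_ident)
  then have "(w \<longlongrightarrow> 0) at_top"
    unfolding w_def using tendsto_mult_left[of _ _ _ "- \<i>"] by fastforce
  note lim = cayley_tendsto[OF this Gi G_Gi]
  have E: "E_hi m a b R \<in> carrier_mat (m + a + b) (m + a + b)"
    "E_hi_inv m a b R \<in> carrier_mat (m + a + b) (m + a + b)"
    by (simp_all add: E_hi_def E_hi_inv_def)
  show ?thesis
  proof (rule tendsto_entrywise_cong[OF _ lim(2)])
    show "\<forall>\<^sub>F k in at_top. cayley_approx (w k) = scat_PQRS m a b P Q R S k"
      using eventually_gt_at_top[of 0] lim(1)
    proof eventually_elim
      case (elim k)
      have "(\<i> * complex_of_real k) * w k = 1"
        unfolding w_def using elim(1) by (simp add: field_simps flip: of_real_inverse)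
      from minv_cayley_eq[OF this elim(2) E E_hi_inverse[OF P Q R S]]
      show ?case by (simp add: scat_PQRS_eq_hi[OF P Q R S])
    qed
  qed
qed


lemma scat_PQRS_tendsto_at_right_0:
  assumes P: "P \<in> carrier_mat m b" and Q: "Q \<in> carrier_mat a b" and R: "R \<in> carrier_mat a m"
    and S: "S \<in> carrier_mat m m" and Si: "Si \<in> carrier_mat m m" and S_Si: "S * Si = 1\<^sub>m m"
    and Gi: "Gi \<in> carrier_mat (m + a + b) (m + a + b)"
    and G_Gi: "(K_lo m a b Q R * adj (K_lo m a b Q R) + Pi_lo m a b) * Gi = 1\<^sub>m (m + a + b)"
  shows "tendsto_entrywise (scat_PQRS m a b P Q R S)
    (- (- 1\<^sub>m (m + a + b) + 2 \<cdot>\<^sub>m (adj (K_lo m a b Q R) * Gi * K_lo m a b Q R))) (at_right 0)"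
proof -
  interpret cayley_factors "m + a + b" "K_lo m a b Q R" "Sigma_lo m a b P Si" "Omega_lo m a b Q R" "Pi_lo m a b"
    by (rule cayley_factors_lo[OF P Q R S Si S_Si])
  define w where "w k = \<i> * complex_of_real k" for k :: real
  have "((\<lambda>k. complex_of_real k) \<longlongrightarrow> complex_of_real 0) (at_right 0)"
    by (intro tendsto_of_real tendsto_ident_at)
  then have "(w \<longlongrightarrow> 0) (at_right 0)"
    unfolding w_def using tendsto_mult_left[of _ _ _ \<i>] by fastforce
  note lim = cayley_tendsto[OF this Gi G_Gi]
  have E: "E_lo m a b P S \<in> carrier_mat (m + a + b) (m + a + b)"
    "E_lo_inv m a b P Si \<in> carrier_mat (m + a + b) (m + a + b)"
    by (simp_all add: E_lo_def E_lo_inv_def)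
  have "tendsto_entrywise (\<lambda>k. - cayley_approx (w k))
      (- (- 1\<^sub>m (m + a + b) + 2 \<cdot>\<^sub>m (adj (K_lo m a b Q R) * Gi * K_lo m a b Q R))) (at_right 0)"
    by (rule tendsto_entrywise_uminus[OF _ _ lim(2)]) (use Gi in \<open>auto simp: cayley_approx_def\<close>)
  then show ?thesis
  proof (rule tendsto_entrywise_cong[rotated])
    show "\<forall>\<^sub>F k in at_right 0. - cayley_approx (w k) = scat_PQRS m a b P Q R S k"
      using eventually_at_right_less[of 0] lim(1)
    proof eventually_elim
      case (elim k)
      define c where "c = - (\<i> * complex_of_real k)"
      have "c \<noteq> 0" unfolding c_def using elim(1) by simp
      have "(- \<i> * complex_of_real (inverse k)) * w k = 1"
        unfolding w_def using elim(1) by (simp add: field_simps flip: of_real_inverse)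
      moreover have "c \<cdot>\<^sub>m E_lo m a b P S * ((1 / c) \<cdot>\<^sub>m E_lo_inv m a b P Si) = 1\<^sub>m (m + a + b)"
        using mult_smult_assoc_mat[OF E(1) smult_carrier_mat[OF E(2)], of c "1 / c"]
          mult_smult_distrib[OF E, of "1 / c"] E_lo_inverse[OF P Q R S Si S_Si] \<open>c \<noteq> 0\<close>
        by simp
      ultimately have "minv (c \<cdot>\<^sub>m E_lo m a b P S * (- \<i> * complex_of_real (inverse k) \<cdot>\<^sub>m K_lo m a b Q R
            - Sigma_lo m a b P Si - Omega_lo m a b Q R)) *
          (c \<cdot>\<^sub>m E_lo m a b P S * (- \<i> * complex_of_real (inverse k) \<cdot>\<^sub>m K_lo m a b Q R
            + Sigma_lo m a b P Si + Omega_lo m a b Q R)) = cayley_approx (w k)"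
        using E by (intro minv_cayley_eq elim(2)) auto
      then show ?case
        using elim(1) by (simp add: scat_PQRS_eq_lo[OF P Q R S Si S_Si] c_def)
    qed
  qed
qed


section \<open>All-ones coupling blocks\<close>

lemma block3_cong:
  "x00 = y00 \<Longrightarrow> x01 = y01 \<Longrightarrow> x02 = y02 \<Longrightarrow> x10 = y10 \<Longrightarrow> x11 = y11 \<Longrightarrow> x12 = y12 \<Longrightarrow>
    x20 = y20 \<Longrightarrow> x21 = y21 \<Longrightarrow> x22 = y22 \<Longrightarrow>
    block3 m a b [[x00, x01, x02], [x10, x11, x12], [x20, x21, x22]] =
    block3 m a b [[y00, y01, y02], [y10, y11, y12], [y20, y21, y22]]"
  by simp

lemma id_const_mat_cong: "c = c' \<Longrightarrow> d = d' \<Longrightarrow> id_const_mat n c d = id_const_mat n c' d'"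
  and const_mat_cong: "e = f \<Longrightarrow> const_mat u v e = const_mat u v f"
  by simp_all

(* Closed-form inverse of K_hi K_hi* + Pi_hi for all-ones blocks; with s = q - m r p,
   denom_hi m a b p s is the normalization D_infinity of the theorem. *)
definition denom_hi :: "nat \<Rightarrow> nat \<Rightarrow> nat \<Rightarrow> complex \<Rightarrow> complex \<Rightarrow> complex" where
  "denom_hi m a b p s = 1 + of_nat b * of_nat m * p * p + of_nat b * of_nat a * s * s"

definition gram_inv_hi :: "nat \<Rightarrow> nat \<Rightarrow> nat \<Rightarrow> complex \<Rightarrow> complex \<Rightarrow> complex mat" where
  "gram_inv_hi m a b p s = block3 m a b
    [[id_const_mat m 1 (- of_nat b * p * p / denom_hi m a b p s),
      const_mat m a (- of_nat b * p * s / denom_hi m a b p s), const_mat m b 0],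
     [const_mat a m (- of_nat b * p * s / denom_hi m a b p s),
      id_const_mat a 1 (- of_nat b * s * s / denom_hi m a b p s), const_mat a b 0],
     [const_mat b m 0, const_mat b a 0, id_const_mat b 1 0]]"

context
  fixes m a b :: nat and p q r :: complex
  assumes p: "cnj p = p" and q: "cnj q = q" and r: "cnj r = r"
    and denom: "denom_hi m a b p (q - of_nat m * r * p) \<noteq> 0"
begin

lemma Q_minus_RP_ones: "const_mat a b q - const_mat a m r * const_mat m b p = const_mat a b (q - of_nat m * r * p)"
  by (simp add: const_mat_mult const_mat_minus algebra_simps)

lemma gram_hi_ones_inverse:
  "(K_hi m a b (const_mat m b p) (const_mat a b q) (const_mat a m r) *
      adj (K_hi m a b (const_mat m b p) (const_mat a b q) (const_mat a m r)) + Pi_hi m a b) *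
    gram_inv_hi m a b p (q - of_nat m * r * p) = 1\<^sub>m (m + a + b)"
proof -
  define s where "s = q - of_nat m * r * p"
  have s: "cnj s = s" unfolding s_def using p q r by simp
  have "K_hi m a b (const_mat m b p) (const_mat a b q) (const_mat a m r) *
      adj (K_hi m a b (const_mat m b p) (const_mat a b q) (const_mat a m r)) + Pi_hi m a b =
    block3 m a b [[id_const_mat m 1 (of_nat b * p * p), const_mat m a (of_nat b * p * s), const_mat m b 0],
      [const_mat a m (of_nat b * p * s), id_const_mat a 1 (of_nat b * s * s), const_mat a b 0],
      [const_mat b m 0, const_mat b a 0, id_const_mat b 1 0]]"
    unfolding K_hi_def Pi_hi_def Q_minus_RP_ones one_mat_id_const zero_mat_const s_def[symmetric]
    apply (subst adj_block3, simp_all)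
    apply (subst block3_mult, simp_all)
    apply (subst block3_add, simp_all)
    apply (intro block3_cong)
            apply (simp_all add: const_mat_simps p s algebra_simps)
    done
  also have "\<dots> * gram_inv_hi m a b p s = 1\<^sub>m (m + a + b)"
    unfolding gram_inv_hi_def one_mat_block3
    unfolding one_mat_id_const zero_mat_const
    apply (subst block3_mult, simp_all)
    apply (intro block3_cong)
            apply (simp_all add: const_mat_simps)
    apply (intro id_const_mat_cong const_mat_cong; (simp; fail)?;
        use denom in \<open>simp add: s_def[symmetric] denom_hi_def divide_simps\<close>; simp add: algebra_simps)+
    done
  finally show ?thesis unfolding s_def .
qed

lemma K_hi_gram_inv_K_hi:
  "adj (K_hi m a b (const_mat m b p) (const_mat a b q) (const_mat a m r)) * gram_inv_hi m a b p (q - of_nat m * r * p) *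
    K_hi m a b (const_mat m b p) (const_mat a b q) (const_mat a m r) = block3 m a b
    [[id_const_mat m 1 (- of_nat b * p * p / denom_hi m a b p (q - of_nat m * r * p)),
      const_mat m a (- of_nat b * p * (q - of_nat m * r * p) / denom_hi m a b p (q - of_nat m * r * p)),
      const_mat m b (p / denom_hi m a b p (q - of_nat m * r * p))],
     [const_mat a m (- of_nat b * p * (q - of_nat m * r * p) / denom_hi m a b p (q - of_nat m * r * p)),
      id_const_mat a 1 (- of_nat b * (q - of_nat m * r * p) * (q - of_nat m * r * p) / denom_hi m a b p (q - of_nat m * r * p)),
      const_mat a b ((q - of_nat m * r * p) / denom_hi m a b p (q - of_nat m * r * p))],
     [const_mat b m (p / denom_hi m a b p (q - of_nat m * r * p)),
      const_mat b a ((q - of_nat m * r * p) / denom_hi m a b p (q - of_nat m * r * p)),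
      const_mat b b ((of_nat m * p * p + of_nat a * (q - of_nat m * r * p) * (q - of_nat m * r * p)) /
        denom_hi m a b p (q - of_nat m * r * p))]]"
proof -
  define s where "s = q - of_nat m * r * p"
  have s: "cnj s = s" unfolding s_def using p q r by simp
  show ?thesis
    unfolding K_hi_def gram_inv_hi_def Q_minus_RP_ones one_mat_id_const zero_mat_const s_def[symmetric]
    apply (subst adj_block3, simp_all add: const_mat_simps p s)
    apply (subst block3_mult, simp_all add: const_mat_simps p s)
    apply (subst block3_mult, simp_all add: const_mat_simps p s)
    apply (intro block3_cong)
            apply (intro id_const_mat_cong const_mat_cong; (simp; fail)?;
        use denom in \<open>simp add: s_def[symmetric] denom_hi_def divide_simps\<close>; simp add: algebra_simps)+
    done
qed

end


(* Likewise for K_lo K_lo* + Pi_lo, with denom_lo m a b q r = D_0. *)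
definition denom_lo :: "nat \<Rightarrow> nat \<Rightarrow> nat \<Rightarrow> complex \<Rightarrow> complex \<Rightarrow> complex" where
  "denom_lo m a b q r = 1 + of_nat a * of_nat m * r * r + of_nat a * of_nat b * q * q"

definition gram_inv_lo :: "nat \<Rightarrow> nat \<Rightarrow> nat \<Rightarrow> complex \<Rightarrow> complex \<Rightarrow> complex mat" where
  "gram_inv_lo m a b q r = block3 m a b
    [[id_const_mat m 1 (- of_nat a * r * r / denom_lo m a b q r), const_mat m a 0,
      const_mat m b (- of_nat a * r * q / denom_lo m a b q r)],
     [const_mat a m 0, id_const_mat a 1 0, const_mat a b 0],
     [const_mat b m (- of_nat a * r * q / denom_lo m a b q r), const_mat b a 0,
      id_const_mat b 1 (- of_nat a * q * q / denom_lo m a b q r)]]"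

context
  fixes m a b :: nat and q r :: complex
  assumes q: "cnj q = q" and r: "cnj r = r" and denom: "denom_lo m a b q r \<noteq> 0"
begin

lemma gram_lo_ones_inverse:
  "(K_lo m a b (const_mat a b q) (const_mat a m r) * adj (K_lo m a b (const_mat a b q) (const_mat a m r)) +
      Pi_lo m a b) * gram_inv_lo m a b q r = 1\<^sub>m (m + a + b)"
proof -
  have "K_lo m a b (const_mat a b q) (const_mat a m r) * adj (K_lo m a b (const_mat a b q) (const_mat a m r)) +
      Pi_lo m a b =
    block3 m a b [[id_const_mat m 1 (of_nat a * r * r), const_mat m a 0, const_mat m b (of_nat a * r * q)],
      [const_mat a m 0, id_const_mat a 1 0, const_mat a b 0],
      [const_mat b m (of_nat a * r * q), const_mat b a 0, id_const_mat b 1 (of_nat a * q * q)]]"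
    unfolding K_lo_def Pi_lo_def one_mat_id_const zero_mat_const
    apply (subst adj_block3, simp_all add: const_mat_simps q r)
    apply (subst block3_mult, simp_all add: const_mat_simps q r)
    apply (subst block3_add, simp_all add: const_mat_simps q r)
    apply (intro block3_cong)
            apply (simp_all add: algebra_simps)
    done
  also have "\<dots> * gram_inv_lo m a b q r = 1\<^sub>m (m + a + b)"
    unfolding gram_inv_lo_def one_mat_block3
    unfolding one_mat_id_const zero_mat_const
    apply (subst block3_mult, simp_all)
    apply (intro block3_cong)
            apply (simp_all add: const_mat_simps)
    apply (intro id_const_mat_cong const_mat_cong; (simp; fail)?;
        use denom in \<open>simp add: denom_lo_def divide_simps\<close>; simp add: algebra_simps)+
    done
  finally show ?thesis .
qed

lemma K_lo_gram_inv_K_lo: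
  "adj (K_lo m a b (const_mat a b q) (const_mat a m r)) * gram_inv_lo m a b q r *
    K_lo m a b (const_mat a b q) (const_mat a m r) = block3 m a b
    [[id_const_mat m 1 (- of_nat a * r * r / denom_lo m a b q r), const_mat m a (- r / denom_lo m a b q r),
      const_mat m b (- of_nat a * r * q / denom_lo m a b q r)],
     [const_mat a m (- r / denom_lo m a b q r),
      const_mat a a ((of_nat m * r * r + of_nat b * q * q) / denom_lo m a b q r),
      const_mat a b (- q / denom_lo m a b q r)],
     [const_mat b m (- of_nat a * r * q / denom_lo m a b q r), const_mat b a (- q / denom_lo m a b q r),
      id_const_mat b 1 (- of_nat a * q * q / denom_lo m a b q r)]]"
  unfolding K_lo_def gram_inv_lo_def one_mat_id_const zero_mat_const
  apply (subst adj_block3, simp_all add: const_mat_simps q r)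
  apply (subst block3_mult, simp_all add: const_mat_simps q r)
  apply (subst block3_mult, simp_all add: const_mat_simps q r)
  apply (intro block3_cong)
          apply (intro id_const_mat_cong const_mat_cong; (simp; fail)?;
      use denom in \<open>simp add: denom_lo_def divide_simps\<close>; simp add: algebra_simps)+
  done

end


lemma scat_PQRS_ones_limits_at_top:
  fixes m a b :: nat and p q r :: real and S :: "complex mat"
  assumes S: "S \<in> carrier_mat m m"
  defines "P \<equiv> complex_of_real p \<cdot>\<^sub>m ones_mat m b" and "Q \<equiv> complex_of_real q \<cdot>\<^sub>m ones_mat a b"
    and "R \<equiv> complex_of_real r \<cdot>\<^sub>m ones_mat a m"
    and "D \<equiv> 1 + real (b * m) * \<bar>p\<bar>^2 + real (b * a) * \<bar>q - real m * r * p\<bar>^2"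
  shows "i < m \<Longrightarrow> m \<le> j \<Longrightarrow> j < m + a \<Longrightarrow>
      ((\<lambda>k. cmod (scat_PQRS m a b P Q R S k $$ (i, j))) \<longlongrightarrow>
        2 * real b * \<bar>p\<bar> * \<bar>q - real m * r * p\<bar> / D) at_top"
    and "m \<le> i \<Longrightarrow> i < m + a \<Longrightarrow> m + a \<le> j \<Longrightarrow> j < m + a + b \<Longrightarrow>
      ((\<lambda>k. cmod (scat_PQRS m a b P Q R S k $$ (i, j))) \<longlongrightarrow> 2 * \<bar>q - real m * r * p\<bar> / D) at_top"
    and "m + a \<le> i \<Longrightarrow> i < m + a + b \<Longrightarrow> j < m \<Longrightarrow>
      ((\<lambda>k. cmod (scat_PQRS m a b P Q R S k $$ (i, j))) \<longlongrightarrow> 2 * \<bar>p\<bar> / D) at_top"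
proof -
  have PQR: "P = const_mat m b (complex_of_real p)" "Q = const_mat a b (complex_of_real q)"
    "R = const_mat a m (complex_of_real r)"
    unfolding P_def Q_def R_def const_mat_def by simp_all
  have "D > 0" unfolding D_def by (simp add: add_pos_nonneg)
  have s: "complex_of_real q - of_nat m * complex_of_real r * complex_of_real p = complex_of_real (q - real m * r * p)"
    by simp
  have real: "cnj (complex_of_real p) = p" "cnj (complex_of_real q) = q" "cnj (complex_of_real r) = r"
    by simp_all
  have denom: "denom_hi m a b (complex_of_real p) (complex_of_real q - of_nat m * complex_of_real r * complex_of_real p) =
      complex_of_real D"
    unfolding denom_hi_def D_def by (simp add: power2_eq_square)
  then have denom_ne:
    "denom_hi m a b (complex_of_real p) (complex_of_real q - of_nat m * complex_of_real r * complex_of_real p) \<noteq> 0"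
    using \<open>D > 0\<close> by simp
  have "gram_inv_hi m a b (complex_of_real p) (complex_of_real q - of_nat m * complex_of_real r * complex_of_real p)
      \<in> carrier_mat (m + a + b) (m + a + b)"
    by (simp add: gram_inv_hi_def)
  note lim = scat_PQRS_tendsto_at_top[OF const_mat_carrier const_mat_carrier const_mat_carrier S this
      gram_hi_ones_inverse[OF real denom_ne], unfolded K_hi_gram_inv_K_hi[OF real denom_ne] denom,
      unfolded s, folded PQR]
  show "i < m \<Longrightarrow> m \<le> j \<Longrightarrow> j < m + a \<Longrightarrow>
      ((\<lambda>k. cmod (scat_PQRS m a b P Q R S k $$ (i, j))) \<longlongrightarrow>
        2 * real b * \<bar>p\<bar> * \<bar>q - real m * r * p\<bar> / D) at_top"
    and "m \<le> i \<Longrightarrow> i < m + a \<Longrightarrow> m + a \<le> j \<Longrightarrow> j < m + a + b \<Longrightarrow>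
      ((\<lambda>k. cmod (scat_PQRS m a b P Q R S k $$ (i, j))) \<longlongrightarrow> 2 * \<bar>q - real m * r * p\<bar> / D) at_top"
    and "m + a \<le> i \<Longrightarrow> i < m + a + b \<Longrightarrow> j < m \<Longrightarrow>
      ((\<lambda>k. cmod (scat_PQRS m a b P Q R S k $$ (i, j))) \<longlongrightarrow> 2 * \<bar>p\<bar> / D) at_top"
    using tendsto_norm[OF tendsto_entrywiseD[OF lim, of i j]] \<open>D > 0\<close>
    by (simp_all add: block3_index_off_diagonal norm_mult norm_divide mult.assoc del: of_real_diff of_real_mult)
qed


lemma scat_PQRS_ones_limits_at_right_0:
  fixes m a b :: nat and p q r :: real and S :: "complex mat"
  assumes S: "S \<in> carrier_mat m m" and S_inv: "invertible_mat S"
  defines "P \<equiv> complex_of_real p \<cdot>\<^sub>m ones_mat m b" and "Q \<equiv> complex_of_real q \<cdot>\<^sub>m ones_mat a b"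
    and "R \<equiv> complex_of_real r \<cdot>\<^sub>m ones_mat a m"
    and "D \<equiv> 1 + real (a * m) * \<bar>r\<bar>^2 + real (b * a) * \<bar>q\<bar>^2"
  shows "i < m \<Longrightarrow> m \<le> j \<Longrightarrow> j < m + a \<Longrightarrow>
      ((\<lambda>k. cmod (scat_PQRS m a b P Q R S k $$ (i, j))) \<longlongrightarrow> 2 * \<bar>r\<bar> / D) (at_right 0)"
    and "m \<le> i \<Longrightarrow> i < m + a \<Longrightarrow> m + a \<le> j \<Longrightarrow> j < m + a + b \<Longrightarrow>
      ((\<lambda>k. cmod (scat_PQRS m a b P Q R S k $$ (i, j))) \<longlongrightarrow> 2 * \<bar>q\<bar> / D) (at_right 0)"
    and "m + a \<le> i \<Longrightarrow> i < m + a + b \<Longrightarrow> j < m \<Longrightarrow>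
      ((\<lambda>k. cmod (scat_PQRS m a b P Q R S k $$ (i, j))) \<longlongrightarrow> 2 * real a * \<bar>r\<bar> * \<bar>q\<bar> / D)
        (at_right 0)"
proof -
  obtain Si where S_Si: "S * Si = 1\<^sub>m m" and Si_S: "Si * S = 1\<^sub>m (dim_row Si)"
    using S_inv S unfolding invertible_mat_def inverts_mat_def by auto
  have Si: "Si \<in> carrier_mat m m"
    using S_Si Si_S S by (metis carrier_matD index_mult_mat(2,3) index_one_mat(2,3) carrier_matI)
  have PQR: "P = const_mat m b (complex_of_real p)" "Q = const_mat a b (complex_of_real q)"
    "R = const_mat a m (complex_of_real r)"
    unfolding P_def Q_def R_def const_mat_def by simp_all
  have "D > 0" unfolding D_def by (simp add: add_pos_nonneg)
  have real: "cnj (complex_of_real q) = q" "cnj (complex_of_real r) = r"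
    by simp_all
  have denom: "denom_lo m a b (complex_of_real q) (complex_of_real r) = complex_of_real D"
    unfolding denom_lo_def D_def by (simp add: power2_eq_square)
  then have denom_ne: "denom_lo m a b (complex_of_real q) (complex_of_real r) \<noteq> 0"
    using \<open>D > 0\<close> by simp
  have "gram_inv_lo m a b (complex_of_real q) (complex_of_real r) \<in> carrier_mat (m + a + b) (m + a + b)"
    by (simp add: gram_inv_lo_def)
  note lim = scat_PQRS_tendsto_at_right_0[OF const_mat_carrier[of m b "complex_of_real p"]
      const_mat_carrier const_mat_carrier S Si S_Si this
      gram_lo_ones_inverse[OF real denom_ne], unfolded K_lo_gram_inv_K_lo[OF real denom_ne] denom,
      folded PQR]
  show "i < m \<Longrightarrow> m \<le> j \<Longrightarrow> j < m + a \<Longrightarrow>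
      ((\<lambda>k. cmod (scat_PQRS m a b P Q R S k $$ (i, j))) \<longlongrightarrow> 2 * \<bar>r\<bar> / D) (at_right 0)"
    and "m \<le> i \<Longrightarrow> i < m + a \<Longrightarrow> m + a \<le> j \<Longrightarrow> j < m + a + b \<Longrightarrow>
      ((\<lambda>k. cmod (scat_PQRS m a b P Q R S k $$ (i, j))) \<longlongrightarrow> 2 * \<bar>q\<bar> / D) (at_right 0)"
    and "m + a \<le> i \<Longrightarrow> i < m + a + b \<Longrightarrow> j < m \<Longrightarrow>
      ((\<lambda>k. cmod (scat_PQRS m a b P Q R S k $$ (i, j))) \<longlongrightarrow> 2 * real a * \<bar>r\<bar> * \<bar>q\<bar> / D)
        (at_right 0)"
    using tendsto_norm[OF tendsto_entrywiseD[OF lim, of i j]] \<open>D > 0\<close>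
    by (simp_all add: block3_index_off_diagonal norm_mult norm_divide mult.assoc)
qed

theorem mainTheorem6:
  fixes n rA rB m a b :: nat and p q r :: real and S :: "complex mat"
  assumes "rA \<le> n" and "rB \<le> n"
    and m_def: "m = rA + rB - n" and "m \<ge> 1"
    and a_def: "a = n - rA" and "a \<ge> 1"
    and b_def: "b = n - rB" and "b \<ge> 1"
    and S_carrier: "S \<in> carrier_mat m m" and S_inv: "invertible_mat S" and S_sa: "adj S = S"
  defines "P \<equiv> complex_of_real p \<cdot>\<^sub>m ones_mat m b"
    and "Q \<equiv> complex_of_real q \<cdot>\<^sub>m ones_mat a b"
    and "R \<equiv> complex_of_real r \<cdot>\<^sub>m ones_mat a m"
    and "Dinf \<equiv> 1 + real ((n - rB) * (rA + rB - n)) * \<bar>p\<bar>^2 + real ((n - rB) * (n - rA)) * \<bar>q - real m * r * p\<bar>^2"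
    and "D0 \<equiv> 1 + real ((n - rA) * (rA + rB - n)) * \<bar>r\<bar>^2 + real ((n - rB) * (n - rA)) * \<bar>q\<bar>^2"
  shows
    "(\<forall>i j. i < m \<and> m \<le> j \<and> j < m + a \<longrightarrow>
        ((\<lambda>k. cmod (scat_PQRS m a b P Q R S k $$ (i, j)))
           \<longlongrightarrow> 2 * real (n - rB) * \<bar>p\<bar> * \<bar>q - real m * r * p\<bar> / Dinf) at_top \<and>
        ((\<lambda>k. cmod (scat_PQRS m a b P Q R S k $$ (i, j)))
           \<longlongrightarrow> 2 * \<bar>r\<bar> / D0) (at_right 0)) \<and>
     (\<forall>i j. m \<le> i \<and> i < m + a \<and> m + a \<le> j \<and> j < n \<longrightarrow>
        ((\<lambda>k. cmod (scat_PQRS m a b P Q R S k $$ (i, j)))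
           \<longlongrightarrow> 2 * \<bar>q - real m * r * p\<bar> / Dinf) at_top \<and>
        ((\<lambda>k. cmod (scat_PQRS m a b P Q R S k $$ (i, j)))
           \<longlongrightarrow> 2 * \<bar>q\<bar> / D0) (at_right 0)) \<and>
     (\<forall>i j. m + a \<le> i \<and> i < n \<and> j < m \<longrightarrow>
        ((\<lambda>k. cmod (scat_PQRS m a b P Q R S k $$ (i, j)))
           \<longlongrightarrow> 2 * \<bar>p\<bar> / Dinf) at_top \<and>
        ((\<lambda>k. cmod (scat_PQRS m a b P Q R S k $$ (i, j)))
           \<longlongrightarrow> 2 * real (n - rA) * \<bar>r\<bar> * \<bar>q\<bar> / D0) (at_right 0))"
proof -
  have n: "n = m + a + b" "n - rB = b" "rA + rB - n = m" "n - rA = a"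
    using assms(1,2,4) m_def a_def b_def by arith+
  note hi = scat_PQRS_ones_limits_at_top[OF S_carrier, where a = a and b = b and p = p and q = q and r = r,
      folded P_def Q_def R_def]
  note lo = scat_PQRS_ones_limits_at_right_0[OF S_carrier S_inv, where a = a and b = b and p = p and q = q
      and r = r, folded P_def Q_def R_def]
  show ?thesis
    unfolding Dinf_def D0_def n(2-4) unfolding n(1)
    using hi lo by (simp add: mult.commute[of a m])
qed

end
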